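(* Let $\mathsf{X}\subset\mathbb{R}^p$, $\mathsf{Y}\subset\mathbb{R}^q$, let $\tilde s(x\mid\gamma)$ and $\tilde h(\gamma\mid x)$ be conditional pdfs on $\mathsf{X}$ and $\mathsf{Y}$ respectively, and consider the Markov chains with transition densities $k(x,x')=\int_{\mathsf{Y}}\tilde s(x'\mid\gamma)\tilde h(\gamma\mid x)d\gamma$ on $\mathsf{X}$ (transition function $K$, invariant probability $\Pi$) and $\tilde k(\gamma,\gamma')=\int_{\mathsf{X}}\tilde h(\gamma'\mid x)\tilde s(x\mid\gamma)dx$ on $\mathsf{Y}$, both Harris ergodic. Suppose the chain $\tilde k$ satisfies $\int_{\mathsf{Y}}\tilde V(\gamma')\tilde k(\gamma,\gamma')d\gamma'\le\lambda\tilde V(\gamma)+\tilde L$ for all $\gamma$, with $\tilde V:\mathsf{Y}\to[0,\infty)$, $\lambda<1$, $\tilde L<\infty$, and $\tilde k(\gamma,\cdot)\ge\tilde\varepsilon\,\tilde Q(\cdot)$ whenever $\tilde V(\gamma)<d$, for some $\tilde\varepsilon>0$, probability measure $\tilde Q$ and $d>2\tilde L/(1-\lambda)$. Let $\hat\rho_f=(1-\tilde\varepsilon)^r\vee\Big(\frac{1+2\tilde L+\lambda d}{1+d}\Big)^{1-r}\{1+2(\lambda d+\tilde L)\}^r$ for some $r\in(0,1)$. Then for every $x\in\mathsf{X}$ and $m\ge1$, $\|K^m(x,\cdot)-\Pi(\cdot)\|_{TV}\le\Big(2+\frac{\tilde L}{1-\lambda}+\int_{\mathsf{Y}}\tilde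 V(\gamma)\tilde h(\gamma\mid x)d\gamma\Big)\hat\rho_f^{\,m-1}$.
   Context: $K^m$ denotes the $m$-step transition function and $\|\cdot\|_{TV}$ the total variation norm. *)

theory Defs
  imports "HOL-Probability.Probability"
begin

definition markov_kernel :: "'a measure \<Rightarrow> ('a \<Rightarrow> 'a measure) \<Rightarrow> bool" where
  "markov_kernel M P \<longleftrightarrow> P \<in> measurable M (prob_algebra M)"

fun kpow :: "('a \<Rightarrow> 'a measure) \<Rightarrow> nat \<Rightarrow> 'a \<Rightarrow> 'a set \<Rightarrow> real" where
  "kpow P 0 x A = indicator A x"
| "kpow P (Suc n) x A = (\<integral>y. kpow P n y A \<partial>(P x))"

definition tv_dist :: "'a measure \<Rightarrow> ('a set \<Rightarrow> real) \<Rightarrow> ('a set \<Rightarrow> real) \<Rightarrow> real" where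
  "tv_dist M \<mu> \<nu> = (SUP A\<in>sets M. \<bar>\<mu> A - \<nu> A\<bar>)"

definition invariant_prob :: "'a measure \<Rightarrow> ('a \<Rightarrow> 'a measure) \<Rightarrow> 'a measure \<Rightarrow> bool" where
  "invariant_prob M P \<pi> \<longleftrightarrow> prob_space \<pi> \<and> sets \<pi> = sets M \<and>
     (\<forall>A\<in>sets M. emeasure \<pi> A = (\<integral>\<^sup>+x. emeasure (P x) A \<partial>\<pi>))"

text \<open>hit P A n x = probability, starting at x, that the chain enters A at some time
  1 <= t <= n (i.e. P_x(tau_A <= n) with tau_A the first return time).\<close>
fun hit :: "('a \<Rightarrow> 'a measure) \<Rightarrow> 'a set \<Rightarrow> nat \<Rightarrow> 'a \<Rightarrow> real" where
  "hit P A 0 x = 0"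
| "hit P A (Suc n) x = (\<integral>y. indicator A y + indicator (- A) y * hit P A n y \<partial>(P x))"

definition harris_recurrent :: "'a measure \<Rightarrow> ('a \<Rightarrow> 'a measure) \<Rightarrow> bool" where
  "harris_recurrent M P \<longleftrightarrow> (\<exists>\<phi>. sigma_finite_measure \<phi> \<and> sets \<phi> = sets M \<and>
      emeasure \<phi> (space M) > 0 \<and>
      (\<forall>A\<in>sets M. emeasure \<phi> A > 0 \<longrightarrow> (\<forall>x\<in>space M. (\<lambda>n. hit P A n x) \<longlonglongrightarrow> 1)))"

definition aperiodic :: "'a measure \<Rightarrow> ('a \<Rightarrow> 'a measure) \<Rightarrow> 'a measure \<Rightarrow> bool" where
  "aperiodic M P \<pi> \<longleftrightarrow> \<not> (\<exists>d::nat. \<exists>C::nat \<Rightarrow> 'a set. d \<ge> 2 \<and>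
      (\<forall>i<d. C i \<in> sets M \<and> emeasure \<pi> (C i) > 0) \<and>
      (\<forall>i<d. \<forall>j<d. i \<noteq> j \<longrightarrow> C i \<inter> C j = {}) \<and>
      (\<forall>i<d. \<forall>x\<in>C i. emeasure (P x) (C (Suc i mod d)) = 1))"

definition harris_ergodic :: "'a measure \<Rightarrow> ('a \<Rightarrow> 'a measure) \<Rightarrow> bool" where
  "harris_ergodic M P \<longleftrightarrow> markov_kernel M P \<and> harris_recurrent M P \<and>
     (\<exists>\<pi>. invariant_prob M P \<pi> \<and> aperiodic M P \<pi>)"

text \<open>s x g = s~(x | g) (pdf on X), h g x = h~(g | x) (pdf on Y).
  SX, SY are Lebesgue measure restricted to X, Y.\<close>

definition xdens :: "'b measure \<Rightarrow> ('a \<Rightarrow> 'b \<Rightarrow> real) \<Rightarrow> ('b \<Rightarrow> 'a \<Rightarrow> real) \<Rightarrow> 'a \<Rightarrow> 'a \<Rightarrow> ennreal" where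
  "xdens SY s h x x' = (\<integral>\<^sup>+g. ennreal (s x' g * h g x) \<partial>SY)"

definition ydens :: "'a measure \<Rightarrow> ('a \<Rightarrow> 'b \<Rightarrow> real) \<Rightarrow> ('b \<Rightarrow> 'a \<Rightarrow> real) \<Rightarrow> 'b \<Rightarrow> 'b \<Rightarrow> ennreal" where
  "ydens SX s h g g' = (\<integral>\<^sup>+x. ennreal (h g' x * s x g) \<partial>SX)"

definition xkern :: "'a measure \<Rightarrow> 'b measure \<Rightarrow> ('a \<Rightarrow> 'b \<Rightarrow> real) \<Rightarrow> ('b \<Rightarrow> 'a \<Rightarrow> real) \<Rightarrow> 'a \<Rightarrow> 'a measure" where
  "xkern SX SY s h x = density SX (xdens SY s h x)"

definition ykern :: "'a measure \<Rightarrow> 'b measure \<Rightarrow> ('a \<Rightarrow> 'b \<Rightarrow> real) \<Rightarrow> ('b \<Rightarrow> 'a \<Rightarrow> real) \<Rightarrow> 'b \<Rightarrow> 'b measure" where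
  "ykern SX SY s h g = density SY (ydens SX s h g)"

end

(*
  Couple two copies of the gamma-chain, one started from h(. | x) and one from the
  gamma-marginal nu of PI, which is invariant for that chain. While both copies lie in
  C = {V < d} they coalesce with probability at least eps (maximal coupling of the two
  transition densities); elsewhere they move independently. The difference of the two
  time-k marginals is at most the probability of no coalescence by time k. Split this
  event according to the number n of joint visits to C x C. If n >= j = ceil (r k), it has
  probability at most (1 - eps)^j. Otherwise use the bivariate drift function
  1 + V(g) + V(g'): it contracts by alpha = (1 + 2 L + lam d) / (1 + d) off C x C and grows
  by at most beta = 1 + 2 (lam d + L) on it, so by Markov's inequality this part is at most
  alpha^k (beta / alpha)^(j - 1) (1 + E V(g0) + L / (1 - lam)). Both terms are bounded by
  rho^k. Finally K^(k+1)(x, A) is the k-step gamma-chain applied to S_A(g) = s(A | g) and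
  integrated against h(. | x), while PI(A) is S_A integrated against nu, so the bound
  transfers to the x-chain.
*)

theory Submission
  imports Defs
begin

lemma one_minus_min_power_ceil_le:
  fixes e r s :: real and k :: nat
  assumes e: "0 < e" and r: "0 < r" and s: "0 \<le> s"
  shows "(1 - min e 1) ^ nat \<lceil>r * k\<rceil> \<le> (max ((1 - e) powr r) s) ^ k"
proof (cases "k = 0")
  case False
  define j where "j = nat \<lceil>r * k\<rceil>"
  have rk: "0 < r * k" using r False by simp
  then have j1: "1 \<le> j" and jr: "r * k \<le> real j" unfolding j_def by linarith+
  show ?thesis
  proof (cases "1 \<le> e")
    case True
    then show ?thesis using j1 s unfolding j_def[symmetric] by (simp add: power_0_left)
  next
    case False
    let ?q = "1 - e"
    have q: "0 < ?q" "?q \<le> 1" using False e by auto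
    have "(1 - min e 1) ^ j = ?q powr real j" using q False by (simp add: powr_realpow)
    also have "\<dots> \<le> ?q powr (r * k)" using jr q by (intro powr_mono') simp_all
    also have "\<dots> = (?q powr r) ^ k" using q by (simp add: powr_power mult.commute)
    also have "\<dots> \<le> (max ((1 - e) powr r) s) ^ k" by (intro power_mono) simp_all
    finally show ?thesis unfolding j_def .
  qed
qed simp

lemma ratio_power_ceil_mult_power_le:
  fixes \<alpha> \<beta> r :: real and k :: nat
  assumes \<alpha>: "0 < \<alpha>" "\<alpha> \<le> 1" and \<beta>: "1 \<le> \<beta>" and r: "0 < r" "r < 1"
  shows "(\<beta> / \<alpha>) ^ (nat \<lceil>r * k\<rceil> - 1) * \<alpha> ^ k \<le> (\<alpha> powr (1 - r) * \<beta> powr r) ^ k"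
proof (cases "k = 0")
  case False
  define j where "j = nat \<lceil>r * k\<rceil>"
  have rk: "0 < r * k" using r False by simp
  then have j1: "1 \<le> j" and jl: "real j - 1 < r * k" unfolding j_def by linarith+
  have "r * real k \<le> 1 * real k" using r by (intro mult_right_mono) simp_all
  then have jk: "j \<le> k" unfolding j_def by (simp add: ceiling_le_iff nat_le_iff)
  have "(\<beta> / \<alpha>) ^ (j - 1) * \<alpha> ^ k = \<beta> ^ (j - 1) * \<alpha> ^ (k - (j - 1))"
  proof -
    have "\<alpha> ^ k = \<alpha> ^ (j - 1) * \<alpha> ^ (k - (j - 1))" using jk j1 by (simp add: power_add[symmetric])
    then show ?thesis using \<alpha> by (simp add: power_divide field_simps)
  qed
  also have "\<dots> \<le> \<beta> powr (r * k) * \<alpha> powr ((1 - r) * k)"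
  proof (rule mult_mono)
    have "\<beta> ^ (j - 1) = \<beta> powr real (j - 1)" using \<beta> by (simp add: powr_realpow)
    also have "\<dots> \<le> \<beta> powr (r * k)" using jl j1 \<beta> by (intro powr_mono) (simp_all add: of_nat_diff)
    finally show "\<beta> ^ (j - 1) \<le> \<beta> powr (r * k)" .
    have "\<alpha> ^ (k - (j - 1)) = \<alpha> powr real (k - (j - 1))" using \<alpha> by (simp add: powr_realpow)
    also have "\<dots> \<le> \<alpha> powr ((1 - r) * k)"
      using jl j1 jk \<alpha> by (intro powr_mono') (simp_all add: of_nat_diff algebra_simps)
    finally show "\<alpha> ^ (k - (j - 1)) \<le> \<alpha> powr ((1 - r) * k)" .
  qed (use \<alpha> in simp_all)
  also have "\<beta> powr (r * k) * \<alpha> powr ((1 - r) * k) = (\<alpha> powr (1 - r) * \<beta> powr r) ^ k"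
    using \<alpha> \<beta> by (simp add: power_mult_distrib powr_power mult.commute)
  finally show ?thesis unfolding j_def .
qed simp

lemma ennreal_mult_divide_le:
  assumes "x \<le> 1"
  shows "x * y / x \<le> (y :: ennreal)"
proof (cases "x = 0")
  case False
  moreover have "x \<noteq> top" using assms by (auto simp: top_unique)
  ultimately show ?thesis by (simp add: mult.commute[of x] ennreal_mult_divide_eq)
qed simp

lemma ennreal_mult_divide_cancel:
  assumes "c \<le> 1" "c = 0 \<Longrightarrow> x = 0"
  shows "x * c / c = (x :: ennreal)"
proof (cases "c = 0")
  case False
  moreover have "c \<noteq> top" using assms(1) by (auto simp: top_unique)
  ultimately show ?thesis by (simp add: ennreal_mult_divide_eq)
qed (use assms in simp)

lemma min_add_le_add_min:
  assumes "y \<le> c"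
  shows "min (x + y) N \<le> c + min x (N :: ennreal)"
proof (cases "x \<le> N")
  case True
  have "min (x + y) N \<le> c + x" using assms by (simp add: add.commute add_right_mono min.coboundedI1)
  then show ?thesis using True by simp
qed (simp add: min.coboundedI2 add_increasing)

lemma abs_diff_le_max: "0 \<le> x \<Longrightarrow> 0 \<le> y \<Longrightarrow> \<bar>x - y\<bar> \<le> max x (y :: real)"
  by (auto simp: abs_le_iff max_def)

lemma tv_dist_le:
  assumes "\<And>A. A \<in> sets M \<Longrightarrow> ennreal \<bar>\<mu> A - \<nu> A\<bar> \<le> B"
  shows "ennreal (tv_dist M \<mu> \<nu>) \<le> B"
proof (cases "B = \<top>")
  case False
  then obtain b where b: "B = ennreal b" "0 \<le> b" by (cases B) auto
  have "tv_dist M \<mu> \<nu> \<le> b"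
    unfolding tv_dist_def using assms b sets.empty_sets[of M] by (intro cSUP_least) auto
  then show ?thesis using b by (simp add: ennreal_leI)
qed simp

section \<open>Markov operators given by transition densities\<close>

locale density_kernel = sigma_finite_measure M for M :: "'b measure" +
  fixes p :: "'b \<Rightarrow> 'b \<Rightarrow> ennreal"
  assumes p_measurable_pair[measurable]: "case_prod p \<in> borel_measurable (M \<Otimes>\<^sub>M M)"
    and p_integral_one: "\<And>g. g \<in> space M \<Longrightarrow> (\<integral>\<^sup>+g'. p g g' \<partial>M) = 1"
begin

definition P :: "('b \<Rightarrow> ennreal) \<Rightarrow> 'b \<Rightarrow> ennreal" where
  "P F g = (\<integral>\<^sup>+g'. F g' * p g g' \<partial>M)"

lemma p_measurable[measurable]: "g \<in> space M \<Longrightarrow> p g \<in> borel_measurable M"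
  using measurable_compose_Pair1[OF _ p_measurable_pair] by simp

lemma P_measurable[measurable]:
  assumes [measurable]: "F \<in> borel_measurable M"
  shows "P F \<in> borel_measurable M"
  unfolding P_def by measurable

lemma Pk_measurable[measurable]:
  assumes [measurable]: "F \<in> borel_measurable M"
  shows "(P ^^ k) F \<in> borel_measurable M"
  by (induction k) auto

lemma P_mono: "(\<And>g. g \<in> space M \<Longrightarrow> F g \<le> G g) \<Longrightarrow> P F x \<le> P G x"
  unfolding P_def by (intro nn_integral_mono mult_right_mono) auto

lemma P_cong: "(\<And>g. g \<in> space M \<Longrightarrow> F g = G g) \<Longrightarrow> P F x = P G x"
  unfolding P_def by (intro nn_integral_cong) auto

lemma P_const: "g \<in> space M \<Longrightarrow> P (\<lambda>_. c) g = c"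
  unfolding P_def using p_integral_one by (simp add: nn_integral_cmult)

lemma Pk_mono:
  "(\<And>g. g \<in> space M \<Longrightarrow> F g \<le> G g) \<Longrightarrow> g \<in> space M \<Longrightarrow> (P ^^ k) F g \<le> (P ^^ k) G g"
  by (induction k arbitrary: g) (simp_all add: P_mono)

lemma Pk_const: "g \<in> space M \<Longrightarrow> (P ^^ k) (\<lambda>_. c) g = c"
proof (induction k arbitrary: g)
  case (Suc k)
  have "(P ^^ Suc k) (\<lambda>_. c) g = P (\<lambda>_. c) g" using Suc.IH by (auto intro: P_cong)
  then show ?case using P_const[OF Suc.prems] by simp
qed simp

lemma Pk_le_1: "(\<And>g. g \<in> space M \<Longrightarrow> F g \<le> 1) \<Longrightarrow> g \<in> space M \<Longrightarrow> (P ^^ k) F g \<le> 1"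
  using Pk_mono[of F "\<lambda>_. 1"] Pk_const by metis

end

section \<open>Coupling under drift and minorization\<close>

definition coupling_rate :: "real \<Rightarrow> real \<Rightarrow> real \<Rightarrow> real \<Rightarrow> real \<Rightarrow> real" where
  "coupling_rate lam L \<epsilon> d r = max ((1 - \<epsilon>) powr r)
     (((1 + 2 * L + lam * d) / (1 + d)) powr (1 - r) * (1 + 2 * (lam * d + L)) powr r)"

locale drift_minorization = density_kernel M p for M :: "'b measure" and p +
  fixes V :: "'b \<Rightarrow> real" and lam L \<epsilon> d :: real and Q :: "'b measure"
  assumes V_measurable[measurable]: "V \<in> borel_measurable M"
    and V_nonneg: "\<And>g. g \<in> space M \<Longrightarrow> 0 \<le> V g"
    and lam: "0 \<le> lam" "lam < 1"
    and L_nonneg: "0 \<le> L"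
    and drift: "\<And>g. g \<in> space M \<Longrightarrow> (\<integral>\<^sup>+g'. ennreal (V g') * p g g' \<partial>M) \<le> ennreal (lam * V g + L)"
    and eps_pos: "0 < \<epsilon>"
    and Q: "prob_space Q" "sets Q = sets M"
    and minorization: "\<And>g A. g \<in> space M \<Longrightarrow> V g < d \<Longrightarrow> A \<in> sets M \<Longrightarrow>
      ennreal \<epsilon> * emeasure Q A \<le> emeasure (density M (p g)) A"
    and d_large: "2 * L / (1 - lam) < d"
begin

interpretation pair_sigma_finite M M ..

lemma P_affine_V:
  assumes g: "g \<in> space M" and "0 \<le> a" "0 \<le> b"
  shows "P (\<lambda>g'. ennreal (a * V g' + b)) g = ennreal a * (\<integral>\<^sup>+g'. ennreal (V g') * p g g' \<partial>M) + ennreal b"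
proof -
  have "P (\<lambda>g'. ennreal (a * V g' + b)) g
      = (\<integral>\<^sup>+g'. ennreal a * (ennreal (V g') * p g g') + ennreal b * p g g' \<partial>M)"
    unfolding P_def using assms V_nonneg
    by (intro nn_integral_cong) (simp add: ennreal_plus ennreal_mult distrib_right mult.assoc)
  also have "\<dots> = ennreal a * (\<integral>\<^sup>+g'. ennreal (V g') * p g g' \<partial>M) + ennreal b * (\<integral>\<^sup>+g'. p g g' \<partial>M)"
    using g by (simp add: nn_integral_add nn_integral_cmult)
  finally show ?thesis using p_integral_one[OF g] by simp
qed

lemma Pk_V_le:
  "g \<in> space M \<Longrightarrow> (P ^^ k) (\<lambda>g. ennreal (V g)) g \<le> ennreal (lam ^ k * V g + L / (1 - lam) * (1 - lam ^ k))"
proof (induction k arbitrary: g)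
  case (Suc k)
  let ?c = "L / (1 - lam)"
  have c: "0 \<le> ?c" "?c * (1 - lam) = L" using L_nonneg lam by auto
  have lk: "0 \<le> lam ^ k" "lam ^ k \<le> 1" using lam by (auto intro: power_le_one)
  then have ck: "0 \<le> ?c * (1 - lam ^ k)" using c by (intro mult_nonneg_nonneg) simp_all
  have "(P ^^ Suc k) (\<lambda>g. ennreal (V g)) g \<le> P (\<lambda>g'. ennreal (lam ^ k * V g' + ?c * (1 - lam ^ k))) g"
    using Suc.IH by (simp add: P_mono)
  also have "\<dots> = ennreal (lam ^ k) * (\<integral>\<^sup>+g'. ennreal (V g') * p g g' \<partial>M) + ennreal (?c * (1 - lam ^ k))"
    by (rule P_affine_V[OF Suc.prems lk(1) ck])
  also have "\<dots> \<le> ennreal (lam ^ k) * ennreal (lam * V g + L) + ennreal (?c * (1 - lam ^ k))"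
    using drift[OF Suc.prems] by (intro add_mono mult_left_mono) auto
  also have "\<dots> = ennreal (lam ^ k * (lam * V g + L) + ?c * (1 - lam ^ k))"
    using lk ck V_nonneg[OF Suc.prems] lam L_nonneg by (simp add: ennreal_mult ennreal_plus)
  also have "lam ^ k * (lam * V g + L) + ?c * (1 - lam ^ k) = lam ^ Suc k * V g + ?c * (1 - lam ^ Suc k)"
  proof -
    have "lam ^ k * (lam * V g + c * (1 - lam)) + c * (1 - lam ^ k)
        = lam ^ Suc k * V g + c * (1 - lam ^ Suc k)" for c by (simp add: algebra_simps)
    from this[of ?c] show ?thesis by (simp only: c(2))
  qed
  finally show ?case .
qed simp

lemma Pk_min_V_le:
  assumes g: "g \<in> space M"
  shows "(P ^^ k) (\<lambda>g. min (ennreal (V g)) N) g \<le> ennreal (L / (1 - lam)) + min (ennreal (lam ^ k) * ennreal (V g)) N"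
proof -
  let ?c = "L / (1 - lam)"
  have c: "0 \<le> ?c" using L_nonneg lam by simp
  have lk: "0 \<le> lam ^ k" "lam ^ k \<le> 1" using lam by (auto intro: power_le_one)
  have "(P ^^ k) (\<lambda>g. min (ennreal (V g)) N) g \<le> (P ^^ k) (\<lambda>g. ennreal (V g)) g"
    using g by (intro Pk_mono) auto
  also have "\<dots> \<le> ennreal (lam ^ k * V g + ?c * (1 - lam ^ k))" using g by (rule Pk_V_le)
  also have "\<dots> = ennreal (lam ^ k) * ennreal (V g) + ennreal (?c * (1 - lam ^ k))"
  proof -
    have "0 \<le> lam ^ k * V g" "0 \<le> ?c * (1 - lam ^ k)"
      using lk c V_nonneg[OF g] by (intro mult_nonneg_nonneg; simp)+
    then show ?thesis by (simp only: ennreal_plus ennreal_mult[OF lk(1) V_nonneg[OF g]])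
  qed
  finally have "(P ^^ k) (\<lambda>g. min (ennreal (V g)) N) g
      \<le> min (ennreal (lam ^ k) * ennreal (V g) + ennreal (?c * (1 - lam ^ k))) N"
    using Pk_mono[of _ "\<lambda>_. N", OF _ g] Pk_const[OF g] by simp
  also have "\<dots> \<le> ennreal ?c + min (ennreal (lam ^ k) * ennreal (V g)) N"
  proof -
    have "?c * (1 - lam ^ k) \<le> ?c * 1" using c lk by (intro mult_left_mono) simp_all
    then show ?thesis by (intro min_add_le_add_min ennreal_leI) simp
  qed
  finally show ?thesis .
qed

definition overlap :: "'b \<Rightarrow> 'b \<Rightarrow> 'b \<Rightarrow> ennreal" where
  "overlap a b g = min (p a g) (p b g)"

definition overlap_mass :: "'b \<Rightarrow> 'b \<Rightarrow> ennreal" where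
  "overlap_mass a b = (\<integral>\<^sup>+g. overlap a b g \<partial>M)"

definition residual :: "'b \<Rightarrow> 'b \<Rightarrow> 'b \<Rightarrow> ennreal" where
  "residual a b g = p a g - overlap a b g"

lemma overlap_commute: "overlap a b = overlap b a"
  unfolding overlap_def by (simp add: min.commute)

lemma overlap_mass_commute: "overlap_mass a b = overlap_mass b a"
  unfolding overlap_mass_def by (simp only: overlap_commute[of a b])

lemma overlap_measurable[measurable]:
  "a \<in> space M \<Longrightarrow> b \<in> space M \<Longrightarrow> overlap a b \<in> borel_measurable M"
  unfolding overlap_def[abs_def] by measurable

lemma residual_measurable[measurable]:
  "a \<in> space M \<Longrightarrow> b \<in> space M \<Longrightarrow> residual a b \<in> borel_measurable M"
  unfolding residual_def[abs_def] by measurable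

lemma overlap_mass_measurable[measurable]:
  "(\<lambda>z. overlap_mass (fst z) (snd z)) \<in> borel_measurable (M \<Otimes>\<^sub>M M)"
  unfolding overlap_mass_def overlap_def by measurable

lemma overlap_mass_le_1: "a \<in> space M \<Longrightarrow> overlap_mass a b \<le> 1"
  using nn_integral_mono[of M "overlap a b" "p a"] p_integral_one[of a]
  unfolding overlap_mass_def overlap_def by (metis min.cobounded1)

lemma residual_integral:
  assumes "a \<in> space M" "b \<in> space M"
  shows "(\<integral>\<^sup>+g. residual a b g \<partial>M) = 1 - overlap_mass a b"
proof -
  have "(\<integral>\<^sup>+g. residual a b g \<partial>M) = (\<integral>\<^sup>+g. p a g \<partial>M) - overlap_mass a b"
    unfolding residual_def overlap_mass_def using assms overlap_mass_le_1[of a b]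
    by (intro nn_integral_diff) (auto simp: overlap_def overlap_mass_def top_unique)
  then show ?thesis using assms by (simp add: p_integral_one)
qed

lemma residual_overlap_split:
  assumes "a \<in> space M" "b \<in> space M" and [measurable]: "F \<in> borel_measurable M"
  shows "(\<integral>\<^sup>+g. F g * residual a b g \<partial>M) + (\<integral>\<^sup>+g. F g * overlap a b g \<partial>M) = (\<integral>\<^sup>+g. F g * p a g \<partial>M)"
proof -
  have "(\<integral>\<^sup>+g. F g * residual a b g \<partial>M) + (\<integral>\<^sup>+g. F g * overlap a b g \<partial>M)
      = (\<integral>\<^sup>+g. F g * residual a b g + F g * overlap a b g \<partial>M)"
    using assms by (intro nn_integral_add[symmetric]) auto
  also have "\<dots> = (\<integral>\<^sup>+g. F g * p a g \<partial>M)"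
    unfolding residual_def overlap_def
    by (intro nn_integral_cong) (simp add: distrib_left[symmetric] diff_add_cancel_ennreal)
  finally show ?thesis .
qed

lemma residual_integral_eq_0:
  assumes "a \<in> space M" "b \<in> space M" "1 - overlap_mass a b = 0"
    and [measurable]: "F \<in> borel_measurable M"
  shows "(\<integral>\<^sup>+g. F g * residual a b g \<partial>M) = 0"
proof -
  have "AE g in M. residual a b g = 0"
    using residual_integral[of a b] assms by (simp add: nn_integral_0_iff_AE)
  then show ?thesis by (auto intro!: nn_integral_zero' elim: eventually_mono)
qed

lemma overlap_mass_ge:
  assumes ab: "a \<in> space M" "b \<in> space M" and small: "V a < d" "V b < d"
  shows "ennreal (min \<epsilon> 1) \<le> overlap_mass a b"
proof -
  interpret Q: prob_space Q by (rule Q(1))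
  define B where "B = {g \<in> space M. p a g \<le> p b g}"
  have B[measurable]: "B \<in> sets M" unfolding B_def using ab by measurable
  have Bc[measurable]: "space M - B \<in> sets M" by auto
  have "ennreal \<epsilon> * emeasure Q B + ennreal \<epsilon> * emeasure Q (space M - B)
      \<le> (\<integral>\<^sup>+g. p a g * indicator B g \<partial>M) + (\<integral>\<^sup>+g. p b g * indicator (space M - B) g \<partial>M)"
    using minorization[OF ab(1) small(1) B] minorization[OF ab(2) small(2) Bc] ab
    by (intro add_mono) (simp_all add: emeasure_density)
  also have "\<dots> = (\<integral>\<^sup>+g. p a g * indicator B g + p b g * indicator (space M - B) g \<partial>M)"
    using ab by (intro nn_integral_add[symmetric]) measurable
  also have "\<dots> = overlap_mass a b"
    unfolding overlap_mass_def overlap_def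
    by (intro nn_integral_cong) (auto simp: B_def indicator_def min_def)
  finally have "ennreal \<epsilon> * (emeasure Q B + emeasure Q (space M - B)) \<le> overlap_mass a b"
    by (simp add: distrib_left)
  moreover have "emeasure Q B + emeasure Q (space M - B) = emeasure Q (space M)"
    using Q(2) sets.sets_into_space[OF B] by (subst plus_emeasure) (auto simp: Un_absorb1)
  moreover have "emeasure Q (space M) = 1"
    using Q.emeasure_space_1 sets_eq_imp_space_eq[OF Q(2)] by simp
  ultimately have "ennreal \<epsilon> \<le> overlap_mass a b" by simp
  then show ?thesis by (rule order.trans[rotated]) (simp add: ennreal_leI)
qed

definition pair_integral :: "('b \<Rightarrow> ennreal) \<Rightarrow> ('b \<Rightarrow> ennreal) \<Rightarrow> ('b \<times> 'b \<Rightarrow> ennreal) \<Rightarrow> ennreal" where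
  "pair_integral f1 f2 Phi = (\<integral>\<^sup>+a. \<integral>\<^sup>+b. Phi (a, b) * f1 a * f2 b \<partial>M \<partial>M)"

lemma pair_integral_add:
  assumes [measurable]: "f1 \<in> borel_measurable M" "f2 \<in> borel_measurable M"
    "Phi \<in> borel_measurable (M \<Otimes>\<^sub>M M)" "Psi \<in> borel_measurable (M \<Otimes>\<^sub>M M)"
  shows "pair_integral f1 f2 (\<lambda>w. Phi w + Psi w) = pair_integral f1 f2 Phi + pair_integral f1 f2 Psi"
  unfolding pair_integral_def
  by (subst nn_integral_add[symmetric], measurable)
     (intro nn_integral_cong, simp add: distrib_right nn_integral_add)

lemma pair_integral_cmult:
  assumes [measurable]: "f1 \<in> borel_measurable M" "f2 \<in> borel_measurable M"
    "Phi \<in> borel_measurable (M \<Otimes>\<^sub>M M)"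
  shows "pair_integral f1 f2 (\<lambda>w. c * Phi w) = c * pair_integral f1 f2 Phi"
  unfolding pair_integral_def
  by (subst nn_integral_cmult[symmetric], measurable)
     (intro nn_integral_cong, simp add: mult.assoc nn_integral_cmult[symmetric])

lemma pair_integral_mono:
  "(\<And>a b. a \<in> space M \<Longrightarrow> b \<in> space M \<Longrightarrow> Phi (a, b) \<le> Psi (a, b)) \<Longrightarrow>
    pair_integral f1 f2 Phi \<le> pair_integral f1 f2 Psi"
  unfolding pair_integral_def by (intro nn_integral_mono mult_right_mono) auto

lemma pair_integral_cong:
  "(\<And>a b. a \<in> space M \<Longrightarrow> b \<in> space M \<Longrightarrow> Phi (a, b) = Psi (a, b)) \<Longrightarrow>
    pair_integral f1 f2 Phi = pair_integral f1 f2 Psi"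
  by (intro antisym pair_integral_mono) auto

lemma pair_integral_fst:
  assumes [measurable]: "f1 \<in> borel_measurable M" "f2 \<in> borel_measurable M" "F \<in> borel_measurable M"
  shows "pair_integral f1 f2 (\<lambda>w. F (fst w)) = (\<integral>\<^sup>+a. F a * f1 a \<partial>M) * (\<integral>\<^sup>+b. f2 b \<partial>M)"
  unfolding pair_integral_def
  by (subst nn_integral_multc[symmetric], measurable)
     (intro nn_integral_cong, simp add: nn_integral_cmult[symmetric])

lemma pair_integral_snd:
  assumes [measurable]: "f1 \<in> borel_measurable M" "f2 \<in> borel_measurable M" "F \<in> borel_measurable M"
  shows "pair_integral f1 f2 (\<lambda>w. F (snd w)) = (\<integral>\<^sup>+a. f1 a \<partial>M) * (\<integral>\<^sup>+b. F b * f2 b \<partial>M)"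
  unfolding pair_integral_def
  by (subst nn_integral_multc[symmetric], measurable)
     (intro nn_integral_cong, simp add: nn_integral_cmult[symmetric] ac_simps)

lemma pair_integral_const:
  assumes [measurable]: "f1 \<in> borel_measurable M" "f2 \<in> borel_measurable M"
  shows "pair_integral f1 f2 (\<lambda>w. c) = c * (\<integral>\<^sup>+a. f1 a \<partial>M) * (\<integral>\<^sup>+b. f2 b \<partial>M)"
  using pair_integral_fst[of f1 f2 "\<lambda>_. c"] by (simp add: nn_integral_cmult)

lemma pair_integral_residual_fst:
  assumes ab: "a \<in> space M" "b \<in> space M" and [measurable]: "F \<in> borel_measurable M"
  shows "pair_integral (residual a b) (residual b a) (\<lambda>w. F (fst w)) / (1 - overlap_mass a b)
    = (\<integral>\<^sup>+g. F g * residual a b g \<partial>M)"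
  using ab residual_integral_eq_0[OF ab]
  by (simp add: pair_integral_fst residual_integral overlap_mass_commute[of b]
      ennreal_mult_divide_cancel diff_le_self_ennreal)

lemma pair_integral_residual_snd:
  assumes ab: "a \<in> space M" "b \<in> space M" and [measurable]: "F \<in> borel_measurable M"
  shows "pair_integral (residual a b) (residual b a) (\<lambda>w. F (snd w)) / (1 - overlap_mass a b)
    = (\<integral>\<^sup>+g. F g * residual b a g \<partial>M)"
  using ab residual_integral_eq_0[OF ab(2,1)]
  by (simp add: pair_integral_snd residual_integral overlap_mass_commute[of b]
      mult.commute[of "1 - overlap_mass a b"] ennreal_mult_divide_cancel diff_le_self_ennreal)

text \<open>The coupled pair of chains is never constructed as a process; only its one-step
  expectation operator is needed. A potential \<open>Phi n (a, b)\<close> is evaluated at the pair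
  \<open>(a, b)\<close> after \<open>n\<close> joint visits to \<open>C \<times> C\<close>, \<open>C = {V < d}\<close>. On \<open>C \<times> C\<close> the two copies
  coalesce with probability \<open>overlap_mass a b\<close>, and this mass is killed; otherwise they move
  by the normalised residual kernels and the visit counter increases. Off \<open>C \<times> C\<close> they move
  independently. If the overlap mass is \<open>1\<close>, the residuals vanish almost everywhere and the
  quotient is \<open>0 / 0 = 0\<close> in \<open>ennreal\<close>.\<close>

definition coupling_op :: "(nat \<Rightarrow> 'b \<times> 'b \<Rightarrow> ennreal) \<Rightarrow> nat \<Rightarrow> 'b \<times> 'b \<Rightarrow> ennreal" where
  "coupling_op Phi n z = (if V (fst z) < d \<and> V (snd z) < d
      then pair_integral (residual (fst z) (snd z)) (residual (snd z) (fst z)) (Phi (Suc n))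
        / (1 - overlap_mass (fst z) (snd z))
      else pair_integral (p (fst z)) (p (snd z)) (Phi n))"

lemma coupling_op_inside:
  "V a < d \<Longrightarrow> V b < d \<Longrightarrow> coupling_op Phi n (a, b)
    = pair_integral (residual a b) (residual b a) (Phi (Suc n)) / (1 - overlap_mass a b)"
  unfolding coupling_op_def by simp

lemma coupling_op_outside:
  "\<not> (V a < d \<and> V b < d) \<Longrightarrow> coupling_op Phi n (a, b) = pair_integral (p a) (p b) (Phi n)"
  unfolding coupling_op_def by (simp only: fst_conv snd_conv if_False)

definition seq_measurable :: "(nat \<Rightarrow> 'b \<times> 'b \<Rightarrow> ennreal) \<Rightarrow> bool" where
  "seq_measurable Phi \<longleftrightarrow> (\<forall>n. Phi n \<in> borel_measurable (M \<Otimes>\<^sub>M M))"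

definition seq_le :: "(nat \<Rightarrow> 'b \<times> 'b \<Rightarrow> ennreal) \<Rightarrow> (nat \<Rightarrow> 'b \<times> 'b \<Rightarrow> ennreal) \<Rightarrow> bool" where
  "seq_le Phi Psi \<longleftrightarrow> (\<forall>n. \<forall>a\<in>space M. \<forall>b\<in>space M. Phi n (a, b) \<le> Psi n (a, b))"

lemma seq_measurable_coupling_op: "seq_measurable Phi \<Longrightarrow> seq_measurable (coupling_op Phi)"
  unfolding seq_measurable_def
proof
  fix n assume "\<forall>n. Phi n \<in> borel_measurable (M \<Otimes>\<^sub>M M)"
  then have [measurable]: "Phi n \<in> borel_measurable (M \<Otimes>\<^sub>M M)" "Phi (Suc n) \<in> borel_measurable (M \<Otimes>\<^sub>M M)"
    by auto
  show "coupling_op Phi n \<in> borel_measurable (M \<Otimes>\<^sub>M M)"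
    unfolding coupling_op_def[abs_def] pair_integral_def residual_def overlap_mass_def overlap_def
    by measurable
qed

lemma seq_measurable_cmult: "seq_measurable Phi \<Longrightarrow> seq_measurable (\<lambda>n w. c * Phi n w)"
  unfolding seq_measurable_def
proof
  fix n assume "\<forall>n. Phi n \<in> borel_measurable (M \<Otimes>\<^sub>M M)"
  then have [measurable]: "Phi n \<in> borel_measurable (M \<Otimes>\<^sub>M M)" by auto
  show "(\<lambda>w. c * Phi n w) \<in> borel_measurable (M \<Otimes>\<^sub>M M)" by measurable
qed

lemma coupling_op_add:
  assumes "seq_measurable Phi" "seq_measurable Psi" "a \<in> space M" "b \<in> space M"
  shows "coupling_op (\<lambda>n w. Phi n w + Psi n w) n (a, b) = coupling_op Phi n (a, b) + coupling_op Psi n (a, b)"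
  using assms unfolding seq_measurable_def coupling_op_def
  by (simp add: pair_integral_add add_divide_distrib_ennreal)

lemma coupling_op_cmult:
  assumes "seq_measurable Phi" "a \<in> space M" "b \<in> space M"
  shows "coupling_op (\<lambda>n w. c * Phi n w) n (a, b) = c * coupling_op Phi n (a, b)"
  using assms unfolding seq_measurable_def coupling_op_def
  by (simp add: pair_integral_cmult divide_ennreal_def mult.assoc)

lemma coupling_op_mono: "seq_le Phi Psi \<Longrightarrow> seq_le (coupling_op Phi) (coupling_op Psi)"
  unfolding seq_le_def coupling_op_def divide_ennreal_def
  by (auto intro!: mult_right_mono pair_integral_mono)

definition alpha :: real where "alpha = (1 + 2 * L + lam * d) / (1 + d)"

definition beta :: real where "beta = 1 + 2 * (lam * d + L)"

lemma d_pos: "0 < d"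
proof -
  have "0 \<le> 2 * L / (1 - lam)" using L_nonneg lam by simp
  then show ?thesis using d_large by simp
qed

lemma alpha_beta: "0 < alpha" "alpha \<le> 1" "1 \<le> beta"
proof -
  have "2 * L < d * (1 - lam)" using d_large lam by (simp add: pos_divide_less_eq)
  then have "1 + 2 * L + lam * d < 1 + d" by (simp add: algebra_simps)
  moreover have "0 < 1 + 2 * L + lam * d" using L_nonneg lam d_pos by (simp add: add_pos_nonneg)
  ultimately show "0 < alpha" "alpha \<le> 1" unfolding alpha_def using d_pos by (auto simp: divide_le_eq_1)
  show "1 \<le> beta" unfolding beta_def using L_nonneg lam d_pos by simp
qed

lemma coupling_rate_eq: "coupling_rate lam L \<epsilon> d r = max ((1 - \<epsilon>) powr r) (alpha powr (1 - r) * beta powr r)"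
  unfolding coupling_rate_def alpha_def beta_def ..

lemma drift_sum_le_alpha:
  assumes "0 \<le> x" "0 \<le> y" "\<not> (x < d \<and> y < d)"
  shows "1 + (lam * x + L) + (lam * y + L) \<le> alpha * (1 + x + y)"
proof -
  have "0 \<le> (x + y - d) * (1 + 2 * L - lam)" using assms L_nonneg lam by (intro mult_nonneg_nonneg) auto
  then have "(1 + 2 * L + lam * (x + y)) * (1 + d) \<le> (1 + 2 * L + lam * d) * (1 + (x + y))"
    by (simp add: algebra_simps)
  then show ?thesis unfolding alpha_def using d_pos by (simp add: pos_le_divide_eq algebra_simps)
qed

lemma drift_sum_le_beta: "x < d \<Longrightarrow> y < d \<Longrightarrow> 1 + (lam * x + L) + (lam * y + L) \<le> beta"
  unfolding beta_def using lam mult_left_mono[of x d lam] mult_left_mono[of y d lam] by simp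

definition Vpair :: "'b \<times> 'b \<Rightarrow> ennreal" where
  "Vpair w = ennreal (1 + V (fst w) + V (snd w))"

lemma Vpair_measurable[measurable]: "Vpair \<in> borel_measurable (M \<Otimes>\<^sub>M M)"
  unfolding Vpair_def[abs_def] by measurable

lemma one_le_Vpair: "a \<in> space M \<Longrightarrow> b \<in> space M \<Longrightarrow> 1 \<le> Vpair (a, b)"
  unfolding Vpair_def using V_nonneg by (simp add: ennreal_ge_1)

lemma pair_integral_Vpair:
  assumes [measurable]: "f1 \<in> borel_measurable M" "f2 \<in> borel_measurable M"
  shows "pair_integral f1 f2 Vpair = (\<integral>\<^sup>+g. f1 g \<partial>M) * (\<integral>\<^sup>+g. f2 g \<partial>M)
     + (\<integral>\<^sup>+g. ennreal (V g) * f1 g \<partial>M) * (\<integral>\<^sup>+g. f2 g \<partial>M)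
     + (\<integral>\<^sup>+g. f1 g \<partial>M) * (\<integral>\<^sup>+g. ennreal (V g) * f2 g \<partial>M)"
proof -
  have "pair_integral f1 f2 Vpair = pair_integral f1 f2 (\<lambda>w. (1 + ennreal (V (fst w))) + ennreal (V (snd w)))"
    by (intro pair_integral_cong) (simp add: Vpair_def V_nonneg ennreal_plus)
  also have "\<dots> = pair_integral f1 f2 (\<lambda>w. 1 + ennreal (V (fst w)))
      + pair_integral f1 f2 (\<lambda>w. ennreal (V (snd w)))"
    by (rule pair_integral_add) measurable
  also have "pair_integral f1 f2 (\<lambda>w. 1 + ennreal (V (fst w)))
      = pair_integral f1 f2 (\<lambda>w. 1) + pair_integral f1 f2 (\<lambda>w. ennreal (V (fst w)))"
    by (rule pair_integral_add) measurable
  also have "pair_integral f1 f2 (\<lambda>w. ennreal (V (fst w)))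
      = (\<integral>\<^sup>+g. ennreal (V g) * f1 g \<partial>M) * (\<integral>\<^sup>+g. f2 g \<partial>M)"
    by (rule pair_integral_fst) measurable
  also have "pair_integral f1 f2 (\<lambda>w. ennreal (V (snd w)))
      = (\<integral>\<^sup>+g. f1 g \<partial>M) * (\<integral>\<^sup>+g. ennreal (V g) * f2 g \<partial>M)"
    by (rule pair_integral_snd) measurable
  finally show ?thesis by (simp add: pair_integral_const)
qed

lemma pair_integral_p_Vpair_le:
  assumes ab: "a \<in> space M" "b \<in> space M"
  shows "pair_integral (p a) (p b) Vpair \<le> ennreal (1 + (lam * V a + L) + (lam * V b + L))"
proof -
  have "pair_integral (p a) (p b) Vpair
      = 1 + (\<integral>\<^sup>+g. ennreal (V g) * p a g \<partial>M) + (\<integral>\<^sup>+g. ennreal (V g) * p b g \<partial>M)"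
    using ab by (simp add: pair_integral_Vpair p_integral_one)
  also have "\<dots> \<le> 1 + ennreal (lam * V a + L) + ennreal (lam * V b + L)"
    using drift ab by (intro add_mono) auto
  also have "\<dots> = ennreal (1 + (lam * V a + L) + (lam * V b + L))"
  proof -
    have "0 \<le> lam * V a + L" "0 \<le> lam * V b + L" using V_nonneg ab lam L_nonneg by simp_all
    then show ?thesis by (simp only: ennreal_plus[symmetric] ennreal_1[symmetric] add_nonneg_nonneg zero_le_one)
  qed
  finally show ?thesis .
qed

lemma pair_integral_residual_Vpair_le:
  assumes ab: "a \<in> space M" "b \<in> space M" and small: "V a < d" "V b < d"
  shows "pair_integral (residual a b) (residual b a) Vpair / (1 - overlap_mass a b) \<le> ennreal beta"
proof -
  let ?x = "1 - overlap_mass a b"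
  let ?Ia = "\<integral>\<^sup>+g. ennreal (V g) * residual a b g \<partial>M"
  let ?Ib = "\<integral>\<^sup>+g. ennreal (V g) * residual b a g \<partial>M"
  have "pair_integral (residual a b) (residual b a) Vpair = ?x * (?x + ?Ia + ?Ib)"
    using ab by (simp add: pair_integral_Vpair residual_integral overlap_mass_commute[of b] algebra_simps)
  then have "pair_integral (residual a b) (residual b a) Vpair / ?x \<le> ?x + ?Ia + ?Ib"
    by (simp add: ennreal_mult_divide_le diff_le_self_ennreal)
  also have "\<dots> \<le> pair_integral (p a) (p b) Vpair"
    using ab unfolding residual_def
    by (auto simp: pair_integral_Vpair p_integral_one intro!: add_mono nn_integral_mono mult_left_mono
        diff_le_self_ennreal)
  also have "\<dots> \<le> ennreal beta"
    by (rule order.trans[OF pair_integral_p_Vpair_le[OF ab] ennreal_leI[OF drift_sum_le_beta[OF small]]])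
  finally show ?thesis .
qed

definition drift_potential :: "nat \<Rightarrow> 'b \<times> 'b \<Rightarrow> ennreal" where
  "drift_potential n w = ennreal ((alpha / beta) ^ n) * Vpair w"

text \<open>The truncated subtraction \<open>j - n\<close> makes \<open>attempt_potential j n\<close> equal to \<open>1\<close> once \<open>j\<close>
  joint visits to \<open>C \<times> C\<close> have occurred.\<close>

definition attempt_potential :: "nat \<Rightarrow> nat \<Rightarrow> 'b \<times> 'b \<Rightarrow> ennreal" where
  "attempt_potential j n w = ennreal ((1 - min \<epsilon> 1) ^ (j - n))"

lemma seq_measurable_drift_potential: "seq_measurable drift_potential"
  unfolding seq_measurable_def drift_potential_def[abs_def] by measurable

lemma seq_measurable_attempt_potential: "seq_measurable (attempt_potential j)"
  unfolding seq_measurable_def attempt_potential_def by simp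

lemma coupling_op_drift_potential:
  assumes ab: "a \<in> space M" "b \<in> space M"
  shows "coupling_op drift_potential n (a, b) \<le> ennreal alpha * drift_potential n (a, b)"
proof (cases "V a < d \<and> V b < d")
  case True
  have "coupling_op drift_potential n (a, b)
      = ennreal ((alpha / beta) ^ Suc n) * (pair_integral (residual a b) (residual b a) Vpair / (1 - overlap_mass a b))"
    using True ab unfolding drift_potential_def
    by (simp add: coupling_op_inside pair_integral_cmult divide_ennreal_def mult.assoc)
  also have "\<dots> \<le> ennreal ((alpha / beta) ^ Suc n) * ennreal beta"
    using ab True by (intro mult_left_mono pair_integral_residual_Vpair_le) auto
  also have "\<dots> = ennreal alpha * ennreal ((alpha / beta) ^ n)"
    using alpha_beta by (simp add: ennreal_mult[symmetric] del: ennreal_mult)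
  also have "\<dots> \<le> ennreal alpha * drift_potential n (a, b)"
    unfolding drift_potential_def using mult_left_mono[OF one_le_Vpair[OF ab], of "ennreal ((alpha / beta) ^ n)"]
    by (intro mult_left_mono) auto
  finally show ?thesis .
next
  case False
  have "coupling_op drift_potential n (a, b) = ennreal ((alpha / beta) ^ n) * pair_integral (p a) (p b) Vpair"
    using ab unfolding coupling_op_outside[OF False] drift_potential_def by (simp add: pair_integral_cmult)
  also have "\<dots> \<le> ennreal ((alpha / beta) ^ n) * ennreal (alpha * (1 + V a + V b))"
    using pair_integral_p_Vpair_le[OF ab] drift_sum_le_alpha[OF V_nonneg[OF ab(1)] V_nonneg[OF ab(2)] False]
    by (intro mult_left_mono) (auto intro: order.trans ennreal_leI)
  also have "\<dots> = ennreal alpha * drift_potential n (a, b)"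
    unfolding drift_potential_def Vpair_def using alpha_beta V_nonneg ab
    by (simp add: ennreal_mult mult_ac)
  finally show ?thesis .
qed

lemma coupling_op_attempt_potential:
  assumes ab: "a \<in> space M" "b \<in> space M"
  shows "coupling_op (attempt_potential j) n (a, b) \<le> attempt_potential j n (a, b)"
proof (cases "V a < d \<and> V b < d")
  case True
  let ?q = "1 - min \<epsilon> 1"
  have q: "0 \<le> ?q" "?q \<le> 1" using eps_pos by auto
  let ?c = "ennreal (?q ^ (j - Suc n))"
  let ?x = "1 - overlap_mass a b"
  have "coupling_op (attempt_potential j) n (a, b) = ?c * ?x * ?x / ?x"
    using True ab unfolding attempt_potential_def
    by (simp add: coupling_op_inside pair_integral_const residual_integral overlap_mass_commute[of b])
  also have "\<dots> \<le> ?c * ?x" using ennreal_mult_divide_le[of ?x "?c * ?x"]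
    by (simp add: diff_le_self_ennreal mult.commute)
  also have "\<dots> \<le> ?c * (1 - ennreal (min \<epsilon> 1))"
    using overlap_mass_ge[OF ab] True by (intro mult_left_mono ennreal_minus_mono) auto
  also have "\<dots> = ennreal (?q ^ (j - Suc n) * ?q)"
    using q ennreal_minus[of "min \<epsilon> 1" 1] eps_pos by (simp add: ennreal_mult)
  also have "\<dots> \<le> ennreal (?q ^ (j - n))"
  proof (cases "n < j")
    case True
    then have "j - n = Suc (j - Suc n)" by simp
    then show ?thesis by (simp add: mult.commute)
  qed (use q in simp)
  finally show ?thesis unfolding attempt_potential_def .
next
  case False
  then show ?thesis
    using ab unfolding coupling_op_outside[OF False] attempt_potential_def
    by (simp add: pair_integral_const p_integral_one)
qed

lemma one_le_attempt_drift_potential: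
  assumes ab: "a \<in> space M" "b \<in> space M"
  shows "1 \<le> attempt_potential j n (a, b) + ennreal ((beta / alpha) ^ (j - 1)) * drift_potential n (a, b)"
proof (cases "j \<le> n")
  case False
  then have "n \<le> j - 1" by simp
  let ?th = "alpha / beta"
  have th: "0 < ?th" "?th \<le> 1" using alpha_beta by auto
  have "1 = (beta / alpha) ^ (j - 1) * ?th ^ (j - 1)" using alpha_beta by (simp flip: power_mult_distrib)
  also have "\<dots> \<le> (beta / alpha) ^ (j - 1) * ?th ^ n"
    using th alpha_beta \<open>n \<le> j - 1\<close> by (intro mult_left_mono power_decreasing) simp_all
  finally have "1 \<le> ennreal ((beta / alpha) ^ (j - 1) * ?th ^ n)" by simp
  also have "\<dots> = ennreal ((beta / alpha) ^ (j - 1)) * ennreal (?th ^ n)"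
    using th alpha_beta by (simp add: ennreal_mult)
  also have "\<dots> \<le> ennreal ((beta / alpha) ^ (j - 1)) * drift_potential n (a, b)"
    unfolding drift_potential_def using one_le_Vpair[OF ab] mult_left_mono[of 1 "Vpair (a, b)"]
    by (intro mult_left_mono) auto
  finally show ?thesis by (rule order.trans) simp
qed (simp add: attempt_potential_def)

end

locale stationary_coupling = drift_minorization M p V lam L \<epsilon> d Q
  for M :: "'b measure" and p V lam L \<epsilon> d Q +
  fixes u0 nu :: "'b \<Rightarrow> ennreal"
  assumes u0_measurable[measurable]: "u0 \<in> borel_measurable M" and u0_integral: "(\<integral>\<^sup>+g. u0 g \<partial>M) = 1"
    and nu_measurable[measurable]: "nu \<in> borel_measurable M" and nu_integral: "(\<integral>\<^sup>+g. nu g \<partial>M) = 1"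
    and nu_stationary: "\<And>F. F \<in> borel_measurable M \<Longrightarrow> (\<integral>\<^sup>+g. nu g * P F g \<partial>M) = (\<integral>\<^sup>+g. nu g * F g \<partial>M)"
begin

interpretation pair_sigma_finite M M ..

text \<open>\<open>uncoupled k Phi\<close> is the expectation of \<open>Phi\<close> at time \<open>k\<close>, on the event that the copies
  started from \<open>u0\<close> and \<open>nu\<close> have not coalesced; \<open>coalesced k F\<close> is the part of the time-\<open>k\<close>
  expectation of \<open>F\<close> carried by coalesced paths, which both copies share.\<close>

definition uncoupled :: "nat \<Rightarrow> (nat \<Rightarrow> 'b \<times> 'b \<Rightarrow> ennreal) \<Rightarrow> ennreal" where
  "uncoupled k Phi = pair_integral u0 nu ((coupling_op ^^ k) Phi 0)"

lemma uncoupled_Suc: "uncoupled (Suc k) Phi = uncoupled k (coupling_op Phi)"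
  unfolding uncoupled_def by (simp only: funpow_Suc_right comp_apply)

lemma uncoupled_mono: "seq_le Phi Psi \<Longrightarrow> uncoupled k Phi \<le> uncoupled k Psi"
proof (induction k arbitrary: Phi Psi)
  case 0
  then show ?case unfolding uncoupled_def by (auto simp: seq_le_def intro: pair_integral_mono)
next
  case (Suc k)
  then show ?case unfolding uncoupled_Suc by (intro Suc.IH coupling_op_mono)
qed

lemma uncoupled_cong:
  "(\<And>n a b. a \<in> space M \<Longrightarrow> b \<in> space M \<Longrightarrow> Phi n (a, b) = Psi n (a, b)) \<Longrightarrow> uncoupled k Phi = uncoupled k Psi"
  by (intro antisym uncoupled_mono) (auto simp: seq_le_def)

lemma uncoupled_add:
  "seq_measurable Phi \<Longrightarrow> seq_measurable Psi \<Longrightarrow>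
    uncoupled k (\<lambda>n w. Phi n w + Psi n w) = uncoupled k Phi + uncoupled k Psi"
proof (induction k arbitrary: Phi Psi)
  case 0
  then show ?case unfolding uncoupled_def seq_measurable_def by (simp add: pair_integral_add)
next
  case (Suc k)
  have "uncoupled (Suc k) (\<lambda>n w. Phi n w + Psi n w)
      = uncoupled k (\<lambda>n w. coupling_op Phi n w + coupling_op Psi n w)"
    unfolding uncoupled_Suc using Suc.prems by (intro uncoupled_cong) (simp add: coupling_op_add)
  also have "\<dots> = uncoupled (Suc k) Phi + uncoupled (Suc k) Psi"
    unfolding uncoupled_Suc using Suc by (intro Suc.IH seq_measurable_coupling_op)
  finally show ?case .
qed

lemma uncoupled_cmult: "seq_measurable Phi \<Longrightarrow> uncoupled k (\<lambda>n w. c * Phi n w) = c * uncoupled k Phi"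
proof (induction k arbitrary: Phi)
  case 0
  then show ?case unfolding uncoupled_def seq_measurable_def by (simp add: pair_integral_cmult)
next
  case (Suc k)
  have "uncoupled (Suc k) (\<lambda>n w. c * Phi n w) = uncoupled k (\<lambda>n w. c * coupling_op Phi n w)"
    unfolding uncoupled_Suc using Suc.prems by (intro uncoupled_cong) (simp add: coupling_op_cmult)
  also have "\<dots> = c * uncoupled (Suc k) Phi"
    unfolding uncoupled_Suc using Suc by (intro Suc.IH seq_measurable_coupling_op)
  finally show ?case .
qed

lemma uncoupled_le_geometric:
  assumes "seq_measurable Phi"
    and contract: "\<And>n a b. a \<in> space M \<Longrightarrow> b \<in> space M \<Longrightarrow> coupling_op Phi n (a, b) \<le> c * Phi n (a, b)"
  shows "uncoupled k Phi \<le> c ^ k * pair_integral u0 nu (Phi 0)"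
proof (induction k)
  case (Suc k)
  have "uncoupled (Suc k) Phi \<le> uncoupled k (\<lambda>n w. c * Phi n w)"
    unfolding uncoupled_Suc by (intro uncoupled_mono) (auto simp: seq_le_def contract)
  also have "\<dots> = c * uncoupled k Phi" using assms(1) by (rule uncoupled_cmult)
  also have "\<dots> \<le> c * (c ^ k * pair_integral u0 nu (Phi 0))" by (intro mult_left_mono Suc.IH) auto
  finally show ?case by (simp add: mult.assoc)
qed (simp add: uncoupled_def)

lemma uncoupled_attempt_potential: "uncoupled k (attempt_potential j) \<le> ennreal ((1 - min \<epsilon> 1) ^ j)"
proof -
  have "uncoupled k (attempt_potential j) \<le> 1 ^ k * pair_integral u0 nu (attempt_potential j 0)"
    using coupling_op_attempt_potential
    by (intro uncoupled_le_geometric seq_measurable_attempt_potential) simp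
  also have "pair_integral u0 nu (attempt_potential j 0) = ennreal ((1 - min \<epsilon> 1) ^ j)"
    unfolding attempt_potential_def by (simp add: pair_integral_const u0_integral nu_integral)
  finally show ?thesis by simp
qed

lemma uncoupled_drift_potential:
  "uncoupled k drift_potential
    \<le> ennreal alpha ^ k * (1 + (\<integral>\<^sup>+g. ennreal (V g) * u0 g \<partial>M) + (\<integral>\<^sup>+g. ennreal (V g) * nu g \<partial>M))"
proof -
  have "uncoupled k drift_potential \<le> ennreal alpha ^ k * pair_integral u0 nu (drift_potential 0)"
    using coupling_op_drift_potential by (intro uncoupled_le_geometric seq_measurable_drift_potential)
  also have "drift_potential 0 = Vpair" by (simp add: drift_potential_def[abs_def])
  finally show ?thesis by (simp add: pair_integral_Vpair u0_integral nu_integral)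
qed

definition coalesced_mass :: "('b \<Rightarrow> ennreal) \<Rightarrow> nat \<Rightarrow> 'b \<times> 'b \<Rightarrow> ennreal" where
  "coalesced_mass F n z = (if V (fst z) < d \<and> V (snd z) < d
     then \<integral>\<^sup>+g. F g * overlap (fst z) (snd z) g \<partial>M else 0)"

primrec coalesced :: "nat \<Rightarrow> ('b \<Rightarrow> ennreal) \<Rightarrow> ennreal" where
  "coalesced 0 F = 0"
| "coalesced (Suc k) F = coalesced k (P F) + uncoupled k (coalesced_mass F)"

lemma seq_measurable_coalesced_mass:
  assumes [measurable]: "F \<in> borel_measurable M"
  shows "seq_measurable (coalesced_mass F)"
  unfolding seq_measurable_def coalesced_mass_def[abs_def] overlap_def by measurable

lemma seq_measurable_fst: "F \<in> borel_measurable M \<Longrightarrow> seq_measurable (\<lambda>n w. F (fst w))"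
  unfolding seq_measurable_def by measurable

lemma seq_measurable_snd: "F \<in> borel_measurable M \<Longrightarrow> seq_measurable (\<lambda>n w. F (snd w))"
  unfolding seq_measurable_def by measurable

lemma initial_Pk_split:
  "F \<in> borel_measurable M \<Longrightarrow>
    (\<integral>\<^sup>+g. u0 g * (P ^^ k) F g \<partial>M) = coalesced k F + uncoupled k (\<lambda>n w. F (fst w))"
proof (induction k arbitrary: F)
  case 0
  then show ?case by (simp add: uncoupled_def pair_integral_fst nu_integral mult.commute)
next
  case (Suc k)
  note [measurable] = Suc.prems
  have step: "P F a = coalesced_mass F n (a, b) + coupling_op (\<lambda>n w. F (fst w)) n (a, b)"
    if ab: "a \<in> space M" "b \<in> space M" for n a b
    using residual_overlap_split[OF ab, of F] pair_integral_residual_fst[OF ab, of F] ab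
    by (auto simp: coalesced_mass_def coupling_op_def pair_integral_fst p_integral_one P_def add.commute)
  have "(\<integral>\<^sup>+g. u0 g * (P ^^ Suc k) F g \<partial>M) = coalesced k (P F) + uncoupled k (\<lambda>n w. P F (fst w))"
    unfolding funpow_Suc_right comp_apply by (rule Suc.IH) measurable
  also have "uncoupled k (\<lambda>n w. P F (fst w))
      = uncoupled k (\<lambda>n w. coalesced_mass F n w + coupling_op (\<lambda>n w. F (fst w)) n w)"
    by (intro uncoupled_cong) (simp add: step)
  also have "\<dots> = uncoupled k (coalesced_mass F) + uncoupled (Suc k) (\<lambda>n w. F (fst w))"
    unfolding uncoupled_Suc
    by (intro uncoupled_add seq_measurable_coalesced_mass seq_measurable_coupling_op seq_measurable_fst)
      measurable
  finally show ?case by (simp add: add.assoc)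
qed

lemma stationary_Pk_split:
  "F \<in> borel_measurable M \<Longrightarrow>
    (\<integral>\<^sup>+g. nu g * (P ^^ k) F g \<partial>M) = coalesced k F + uncoupled k (\<lambda>n w. F (snd w))"
proof (induction k arbitrary: F)
  case 0
  then show ?case by (simp add: uncoupled_def pair_integral_snd u0_integral mult.commute)
next
  case (Suc k)
  note [measurable] = Suc.prems
  have step: "P F b = coalesced_mass F n (a, b) + coupling_op (\<lambda>n w. F (snd w)) n (a, b)"
    if ab: "a \<in> space M" "b \<in> space M" for n a b
    using residual_overlap_split[OF ab(2,1), of F] pair_integral_residual_snd[OF ab, of F] ab
    by (auto simp: coalesced_mass_def coupling_op_def pair_integral_snd p_integral_one P_def add.commute
        overlap_commute[of b])
  have "(\<integral>\<^sup>+g. nu g * (P ^^ Suc k) F g \<partial>M) = coalesced k (P F) + uncoupled k (\<lambda>n w. P F (snd w))"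
    unfolding funpow_Suc_right comp_apply by (rule Suc.IH) measurable
  also have "uncoupled k (\<lambda>n w. P F (snd w))
      = uncoupled k (\<lambda>n w. coalesced_mass F n w + coupling_op (\<lambda>n w. F (snd w)) n w)"
    by (intro uncoupled_cong) (simp add: step)
  also have "\<dots> = uncoupled k (coalesced_mass F) + uncoupled (Suc k) (\<lambda>n w. F (snd w))"
    unfolding uncoupled_Suc
    by (intro uncoupled_add seq_measurable_coalesced_mass seq_measurable_coupling_op seq_measurable_snd)
      measurable
  finally show ?case by (simp add: add.assoc)
qed

lemma stationary_Pk: "F \<in> borel_measurable M \<Longrightarrow> (\<integral>\<^sup>+g. nu g * (P ^^ k) F g \<partial>M) = (\<integral>\<^sup>+g. nu g * F g \<partial>M)"
  by (induction k) (simp_all add: nu_stationary)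

lemma stationary_min_geometric_V_INF_eq_0:
  assumes N: "N \<noteq> \<top>"
  shows "(INF k. \<integral>\<^sup>+g. nu g * min (ennreal (lam ^ k) * ennreal (V g)) N \<partial>M) = 0"
proof -
  let ?Nu = "density M nu"
  define f where "f k g = min (ennreal (lam ^ k) * ennreal (V g)) N" for k g
  have [measurable]: "f k \<in> borel_measurable M" for k unfolding f_def by measurable
  have "decseq f"
  proof (intro decseq_SucI le_funI)
    fix k g
    have "ennreal (lam ^ Suc k) \<le> ennreal (lam ^ k)"
      using lam by (intro ennreal_leI) (simp add: mult_left_le_one_le)
    then show "f (Suc k) g \<le> f k g" unfolding f_def by (intro min.mono mult_right_mono) auto
  qed
  moreover have "(\<integral>\<^sup>+g. f k g \<partial>?Nu) < \<infinity>" for k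
  proof -
    have "(\<integral>\<^sup>+g. f k g \<partial>?Nu) \<le> (\<integral>\<^sup>+g. N \<partial>?Nu)" unfolding f_def by (intro nn_integral_mono) simp
    also have "\<dots> = N" by (simp add: emeasure_density nu_integral cong: nn_integral_cong)
    finally show ?thesis using N by (auto simp: less_top[symmetric] top_unique)
  qed
  moreover have "(INF k. f k g) = 0" for g
  proof -
    have "(\<lambda>k. ennreal (lam ^ k * max 0 (V g))) \<longlonglongrightarrow> ennreal 0"
      using lam by (intro tendsto_ennrealI tendsto_mult_left_zero LIMSEQ_power_zero) simp
    moreover have "(INF k. f k g) \<le> ennreal (lam ^ n * max 0 (V g))" for n
    proof -
      have "(INF k. f k g) \<le> f n g" by (rule INF_lower) simp
      also have "\<dots> \<le> ennreal (lam ^ n) * ennreal (V g)" unfolding f_def by simp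
      also have "\<dots> = ennreal (lam ^ n * max 0 (V g))" using lam by (simp add: ennreal_mult ennreal_max_0)
      finally show ?thesis .
    qed
    ultimately have "(INF k. f k g) \<le> ennreal 0" by (intro LIMSEQ_le_const) auto
    then show ?thesis by simp
  qed
  ultimately have "(INF k. \<integral>\<^sup>+g. f k g \<partial>?Nu) = 0"
    by (simp add: nn_integral_monotone_convergence_INF_decseq[symmetric])
  then show ?thesis by (simp add: f_def nn_integral_density)
qed

text \<open>Truncating \<open>V\<close> at \<open>N\<close> keeps all integrals finite, so the iterated drift bound can be
  used before it is known that \<open>nu\<close> integrates \<open>V\<close>.\<close>

lemma stationary_min_V_le:
  assumes "N \<noteq> \<top>"
  shows "(\<integral>\<^sup>+g. nu g * min (ennreal (V g)) N \<partial>M) \<le> ennreal (L / (1 - lam))"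
proof -
  let ?c = "ennreal (L / (1 - lam))"
  have "(\<integral>\<^sup>+g. nu g * min (ennreal (V g)) N \<partial>M)
      \<le> ?c + (\<integral>\<^sup>+g. nu g * min (ennreal (lam ^ k) * ennreal (V g)) N \<partial>M)" for k
  proof -
    have "(\<integral>\<^sup>+g. nu g * min (ennreal (V g)) N \<partial>M) = (\<integral>\<^sup>+g. nu g * (P ^^ k) (\<lambda>g. min (ennreal (V g)) N) g \<partial>M)"
      by (rule stationary_Pk[symmetric]) measurable
    also have "\<dots> \<le> (\<integral>\<^sup>+g. ?c * nu g + nu g * min (ennreal (lam ^ k) * ennreal (V g)) N \<partial>M)"
      using Pk_min_V_le
      by (intro nn_integral_mono) (simp add: distrib_left[symmetric] mult.commute mult_left_mono)
    also have "\<dots> = ?c + (\<integral>\<^sup>+g. nu g * min (ennreal (lam ^ k) * ennreal (V g)) N \<partial>M)"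
      by (simp add: nn_integral_add nn_integral_cmult nu_integral)
    finally show ?thesis .
  qed
  then have "(\<integral>\<^sup>+g. nu g * min (ennreal (V g)) N \<partial>M)
      \<le> (INF k. ?c + (\<integral>\<^sup>+g. nu g * min (ennreal (lam ^ k) * ennreal (V g)) N \<partial>M))"
    by (intro INF_greatest)
  also have "\<dots> = ?c" by (simp add: INF_ennreal_const_add stationary_min_geometric_V_INF_eq_0 assms)
  finally show ?thesis .
qed

lemma stationary_V_le: "(\<integral>\<^sup>+g. ennreal (V g) * nu g \<partial>M) \<le> ennreal (L / (1 - lam))"
proof -
  have "(SUP n. min (ennreal (V g)) (of_nat n)) = ennreal (V g)" for g
  proof (rule antisym)
    obtain n :: nat where "V g \<le> real n" using real_arch_simple by blast
    then have "min (ennreal (V g)) (of_nat n) = ennreal (V g)"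
      by (simp add: ennreal_of_nat_eq_real_of_nat ennreal_leI)
    then show "ennreal (V g) \<le> (SUP n. min (ennreal (V g)) (of_nat n))" by (metis SUP_upper UNIV_I)
  qed (intro SUP_least, simp)
  then have "(\<integral>\<^sup>+g. ennreal (V g) * nu g \<partial>M) = (\<integral>\<^sup>+g. (SUP n. nu g * min (ennreal (V g)) (of_nat n)) \<partial>M)"
    by (intro nn_integral_cong) (simp add: SUP_mult_left_ennreal[symmetric] mult.commute)
  also have "\<dots> = (SUP n. \<integral>\<^sup>+g. nu g * min (ennreal (V g)) (of_nat n) \<partial>M)"
  proof (rule nn_integral_monotone_convergence_SUP)
    show "incseq (\<lambda>n g. nu g * min (ennreal (V g)) (of_nat n))"
      by (intro incseq_SucI le_funI mult_left_mono min.mono) simp_all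
  qed measurable
  also have "\<dots> \<le> ennreal (L / (1 - lam))"
    by (intro SUP_least stationary_min_V_le) simp
  finally show ?thesis .
qed

lemma uncoupled_one_le:
  assumes r: "0 < r" "r < 1"
  shows "uncoupled k (\<lambda>n w. 1)
    \<le> ennreal (coupling_rate lam L \<epsilon> d r ^ k) * (ennreal (2 + L / (1 - lam)) + (\<integral>\<^sup>+g. ennreal (V g) * u0 g \<partial>M))"
proof -
  define j where "j = nat \<lceil>r * k\<rceil>"
  define K where "K = (beta / alpha) ^ (j - 1)"
  define \<rho> where "\<rho> = coupling_rate lam L \<epsilon> d r"
  let ?Vu = "\<integral>\<^sup>+g. ennreal (V g) * u0 g \<partial>M"
  let ?c = "L / (1 - lam)"
  have K: "0 \<le> K" unfolding K_def using alpha_beta by simp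
  have c: "0 \<le> ?c" using L_nonneg lam by simp
  have "uncoupled k (\<lambda>n w. 1) \<le> uncoupled k (\<lambda>n w. attempt_potential j n w + ennreal K * drift_potential n w)"
    using one_le_attempt_drift_potential unfolding K_def by (intro uncoupled_mono) (auto simp: seq_le_def)
  also have "\<dots> = uncoupled k (attempt_potential j) + ennreal K * uncoupled k drift_potential"
    by (simp add: uncoupled_add uncoupled_cmult seq_measurable_cmult seq_measurable_attempt_potential
        seq_measurable_drift_potential)
  also have "\<dots> \<le> ennreal ((1 - min \<epsilon> 1) ^ j)
      + ennreal K * (ennreal alpha ^ k * (1 + ?Vu + ennreal ?c))"
    by (intro add_mono mult_left_mono uncoupled_attempt_potential order.trans[OF uncoupled_drift_potential]
        add_left_mono stationary_V_le) simp_all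
  also have "\<dots> = ennreal ((1 - min \<epsilon> 1) ^ j) + ennreal (K * alpha ^ k) * (1 + ?Vu + ennreal ?c)"
    using K alpha_beta by (simp add: ennreal_mult ennreal_power mult.assoc)
  also have "\<dots> \<le> ennreal (\<rho> ^ k) + ennreal (\<rho> ^ k) * (1 + ?Vu + ennreal ?c)"
  proof (intro add_mono mult_right_mono ennreal_leI)
    show "(1 - min \<epsilon> 1) ^ j \<le> \<rho> ^ k"
      unfolding \<rho>_def coupling_rate_eq j_def using eps_pos r by (intro one_minus_min_power_ceil_le) simp_all
    have "K * alpha ^ k \<le> (alpha powr (1 - r) * beta powr r) ^ k"
      unfolding K_def j_def using alpha_beta r by (intro ratio_power_ceil_mult_power_le)
    also have "\<dots> \<le> \<rho> ^ k" unfolding \<rho>_def coupling_rate_eq by (intro power_mono) simp_all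
    finally show "K * alpha ^ k \<le> \<rho> ^ k" .
  qed simp
  also have "\<dots> = ennreal (\<rho> ^ k) * (ennreal (2 + ?c) + ?Vu)"
  proof -
    have "ennreal (2 + ?c) = 1 + (1 + ennreal ?c)"
      using ennreal_plus[of 1 "1 + ?c"] ennreal_plus[of 1 ?c] c by simp
    then show ?thesis by (simp only: distrib_left mult_1_right add_ac)
  qed
  finally show ?thesis unfolding \<rho>_def .
qed

lemma initial_stationary_diff_le_uncoupled:
  assumes [measurable]: "F \<in> borel_measurable M" and F1: "\<And>g. g \<in> space M \<Longrightarrow> F g \<le> 1"
  shows "ennreal \<bar>enn2real (\<integral>\<^sup>+g. u0 g * (P ^^ k) F g \<partial>M) - enn2real (\<integral>\<^sup>+g. nu g * F g \<partial>M)\<bar>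
    \<le> uncoupled k (\<lambda>n w. 1)"
proof -
  define U1 where "U1 = uncoupled k (\<lambda>n w. F (fst w))"
  define U2 where "U2 = uncoupled k (\<lambda>n w. F (snd w))"
  have init: "(\<integral>\<^sup>+g. u0 g * (P ^^ k) F g \<partial>M) = coalesced k F + U1"
    unfolding U1_def by (rule initial_Pk_split) measurable
  have stat: "(\<integral>\<^sup>+g. nu g * F g \<partial>M) = coalesced k F + U2"
    unfolding U2_def using stationary_Pk_split[of F k] stationary_Pk[of F k] by simp
  have U: "U1 \<le> uncoupled k (\<lambda>n w. 1)" "U2 \<le> uncoupled k (\<lambda>n w. 1)"
    unfolding U1_def U2_def by (auto intro!: uncoupled_mono simp: seq_le_def F1)
  have "(\<integral>\<^sup>+g. u0 g * (P ^^ k) F g \<partial>M) \<le> (\<integral>\<^sup>+g. u0 g \<partial>M)"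
    using Pk_le_1[OF F1] by (intro nn_integral_mono) (simp add: mult_left_le)
  then have "coalesced k F + U1 < \<top>"
    unfolding init u0_integral using ennreal_one_less_top by (rule order.strict_trans1)
  moreover have "(\<integral>\<^sup>+g. nu g * F g \<partial>M) \<le> (\<integral>\<^sup>+g. nu g \<partial>M)"
    using F1 by (intro nn_integral_mono) (simp add: mult_left_le)
  then have "coalesced k F + U2 < \<top>"
    unfolding stat nu_integral using ennreal_one_less_top by (rule order.strict_trans1)
  ultimately have fin: "coalesced k F < \<top>" "U1 < \<top>" "U2 < \<top>" by auto
  have "\<bar>enn2real (coalesced k F + U1) - enn2real (coalesced k F + U2)\<bar> = \<bar>enn2real U1 - enn2real U2\<bar>"
    using fin by (simp add: enn2real_plus)
  also have "\<dots> \<le> max (enn2real U1) (enn2real U2)"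
    using abs_diff_le_max[of "enn2real U1" "enn2real U2"] by simp
  finally have "ennreal \<bar>enn2real (coalesced k F + U1) - enn2real (coalesced k F + U2)\<bar>
      \<le> ennreal (max (enn2real U1) (enn2real U2))" by (rule ennreal_leI)
  also have "\<dots> \<le> uncoupled k (\<lambda>n w. 1)"
    using fin U by (cases "enn2real U1 \<le> enn2real U2") (simp_all add: max_def ennreal_enn2real less_top)
  finally show ?thesis unfolding init stat .
qed

theorem initial_Pk_stationary_diff_le:
  assumes "F \<in> borel_measurable M" "\<And>g. g \<in> space M \<Longrightarrow> F g \<le> 1" and "0 < r" "r < 1"
  shows "ennreal \<bar>enn2real (\<integral>\<^sup>+g. u0 g * (P ^^ k) F g \<partial>M) - enn2real (\<integral>\<^sup>+g. nu g * F g \<partial>M)\<bar>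
    \<le> ennreal (coupling_rate lam L \<epsilon> d r ^ k) * (ennreal (2 + L / (1 - lam)) + (\<integral>\<^sup>+g. ennreal (V g) * u0 g \<partial>M))"
  using initial_stationary_diff_le_uncoupled[OF assms(1,2)] uncoupled_one_le[OF assms(3,4)]
  by (rule order.trans)

end

section \<open>Two-block data augmentation\<close>

locale data_augmentation = SX: sigma_finite_measure SX + SY: sigma_finite_measure SY
  for SX :: "'a measure" and SY :: "'b measure" +
  fixes s :: "'a \<Rightarrow> 'b \<Rightarrow> real" and h :: "'b \<Rightarrow> 'a \<Rightarrow> real" and PI :: "'a measure"
  assumes s_measurable_pair[measurable]: "(\<lambda>(x, g). s x g) \<in> borel_measurable (SX \<Otimes>\<^sub>M SY)"
    and s_nonneg: "\<And>x g. x \<in> space SX \<Longrightarrow> g \<in> space SY \<Longrightarrow> 0 \<le> s x g"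
    and s_integral: "\<And>g. g \<in> space SY \<Longrightarrow> (\<integral>\<^sup>+x. ennreal (s x g) \<partial>SX) = 1"
    and h_measurable_pair[measurable]: "(\<lambda>(g, x). h g x) \<in> borel_measurable (SY \<Otimes>\<^sub>M SX)"
    and h_nonneg: "\<And>g x. g \<in> space SY \<Longrightarrow> x \<in> space SX \<Longrightarrow> 0 \<le> h g x"
    and h_integral: "\<And>x. x \<in> space SX \<Longrightarrow> (\<integral>\<^sup>+g. ennreal (h g x) \<partial>SY) = 1"
    and xkern_markov: "markov_kernel SX (xkern SX SY s h)"
    and PI_invariant: "invariant_prob SX (xkern SX SY s h) PI"
begin

interpretation SXSY: pair_sigma_finite SX SY ..

lemma s_measurable[measurable]: "g \<in> space SY \<Longrightarrow> (\<lambda>x. s x g) \<in> borel_measurable SX"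
  using measurable_Pair2'[of g SY] s_measurable_pair
  by (auto intro: measurable_compose[where f="\<lambda>x. (x, g)"] simp: measurable_pair_iff)

lemma h_measurable[measurable]: "x \<in> space SX \<Longrightarrow> (\<lambda>g. h g x) \<in> borel_measurable SY"
  using measurable_Pair1'[of x SX] h_measurable_pair
  by (auto intro: measurable_compose[where f="\<lambda>g. (g, x)"] simp: measurable_pair_iff)

lemma ydens_measurable_pair[measurable]: "case_prod (ydens SX s h) \<in> borel_measurable (SY \<Otimes>\<^sub>M SY)"
  unfolding ydens_def by measurable

lemma xdens_measurable[measurable]: "x \<in> space SX \<Longrightarrow> xdens SY s h x \<in> borel_measurable SX"
  unfolding xdens_def by measurable

lemma ydens_integral:
  assumes g: "g \<in> space SY"
  shows "(\<integral>\<^sup>+g'. ydens SX s h g g' \<partial>SY) = 1"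
proof -
  have "(\<integral>\<^sup>+g'. ydens SX s h g g' \<partial>SY) = (\<integral>\<^sup>+x. \<integral>\<^sup>+g'. ennreal (s x g) * ennreal (h g' x) \<partial>SY \<partial>SX)"
    unfolding ydens_def using g s_nonneg h_nonneg
    by (subst SXSY.Fubini') (auto intro!: nn_integral_cong simp: ennreal_mult mult.commute)
  also have "\<dots> = (\<integral>\<^sup>+x. ennreal (s x g) \<partial>SX)"
    using g h_integral by (intro nn_integral_cong) (simp add: nn_integral_cmult)
  finally show ?thesis using s_integral g by simp
qed

sublocale gamma: density_kernel SY "ydens SX s h"
  by unfold_locales (fact ydens_measurable_pair, fact ydens_integral)

lemma sets_PI: "sets PI = sets SX"
  using PI_invariant unfolding invariant_prob_def by simp

lemma space_PI: "space PI = space SX"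
  using sets_eq_imp_space_eq[OF sets_PI] .

interpretation PI: prob_space PI
  using PI_invariant unfolding invariant_prob_def by simp

interpretation SYPI: pair_sigma_finite SY PI ..

lemma measurable_PI_iff: "f \<in> borel_measurable PI \<longleftrightarrow> f \<in> borel_measurable SX"
  by (subst measurable_cong_sets[OF sets_PI refl]) (rule refl)

lemma h_measurable_PI[measurable]: "(\<lambda>(g, x). h g x) \<in> borel_measurable (SY \<Otimes>\<^sub>M PI)"
  using h_measurable_pair by (subst measurable_cong_sets[OF sets_pair_measure_cong[OF refl sets_PI] refl])

lemma sets_xkern[simp]: "sets (xkern SX SY s h x) = sets SX"
  unfolding xkern_def by simp

lemma space_xkern[simp]: "space (xkern SX SY s h x) = space SX"
  unfolding xkern_def by simp

lemma measurable_xkern_iff: "f \<in> borel_measurable (xkern SX SY s h x) \<longleftrightarrow> f \<in> borel_measurable SX"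
  by (subst measurable_cong_sets[OF sets_xkern refl]) (rule refl)

lemma xkern_measurable_PI: "xkern SX SY s h \<in> measurable PI (subprob_algebra SX)"
  using xkern_markov unfolding markov_kernel_def
  by (subst measurable_cong_sets[OF sets_PI refl]) (rule measurable_prob_algebraD)

lemma PI_bind_xkern: "PI \<bind> xkern SX SY s h = PI"
proof (rule measure_eqI)
  show "sets (PI \<bind> xkern SX SY s h) = sets PI"
    using PI.not_empty by (simp add: sets_PI)
  fix A assume "A \<in> sets (PI \<bind> xkern SX SY s h)"
  then have A: "A \<in> sets SX" using PI.not_empty by simp
  then show "emeasure (PI \<bind> xkern SX SY s h) A = emeasure PI A"
    using emeasure_bind[OF PI.not_empty xkern_measurable_PI A] PI_invariant unfolding invariant_prob_def by simp
qed

lemma nn_integral_PI_xdens: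
  assumes [measurable]: "G \<in> borel_measurable SX"
  shows "(\<integral>\<^sup>+x. \<integral>\<^sup>+x'. xdens SY s h x x' * G x' \<partial>SX \<partial>PI) = (\<integral>\<^sup>+x. G x \<partial>PI)"
proof -
  have "(\<integral>\<^sup>+x. G x \<partial>PI) = (\<integral>\<^sup>+x. \<integral>\<^sup>+y. G y \<partial>xkern SX SY s h x \<partial>PI)"
    by (subst PI_bind_xkern[symmetric], subst nn_integral_bind[OF _ xkern_measurable_PI]) simp_all
  also have "\<dots> = (\<integral>\<^sup>+x. \<integral>\<^sup>+x'. xdens SY s h x x' * G x' \<partial>SX \<partial>PI)"
    using space_PI unfolding xkern_def by (intro nn_integral_cong nn_integral_density) auto
  finally show ?thesis ..
qed

definition h_lift :: "('b \<Rightarrow> ennreal) \<Rightarrow> 'a \<Rightarrow> ennreal" where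
  "h_lift G x = (\<integral>\<^sup>+g. ennreal (h g x) * G g \<partial>SY)"

lemma h_lift_measurable[measurable]:
  assumes [measurable]: "G \<in> borel_measurable SY"
  shows "h_lift G \<in> borel_measurable SX"
  unfolding h_lift_def by measurable

lemma xdens_h_lift_eq_iterated:
  assumes x: "x \<in> space SX" and x': "x' \<in> space SX" and [measurable]: "G \<in> borel_measurable SY"
  shows "xdens SY s h x x' * h_lift G x'
    = (\<integral>\<^sup>+g. \<integral>\<^sup>+g'. ennreal (h g x) * G g' * ennreal (h g' x') * ennreal (s x' g) \<partial>SY \<partial>SY)"
proof -
  have "xdens SY s h x x' * h_lift G x' = (\<integral>\<^sup>+g. ennreal (s x' g * h g x) * h_lift G x' \<partial>SY)"
    unfolding xdens_def using x x' by (intro nn_integral_multc[symmetric]) measurable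
  also have "\<dots> = (\<integral>\<^sup>+g. \<integral>\<^sup>+g'. ennreal (h g x) * G g' * ennreal (h g' x') * ennreal (s x' g) \<partial>SY \<partial>SY)"
    unfolding h_lift_def using x x' s_nonneg h_nonneg
    by (intro nn_integral_cong, subst nn_integral_cmult[symmetric]) (auto simp: ennreal_mult mult_ac)
  finally show ?thesis .
qed

lemma h_lift_P_eq_iterated:
  assumes x: "x \<in> space SX" and [measurable]: "G \<in> borel_measurable SY"
  shows "h_lift (gamma.P G) x
    = (\<integral>\<^sup>+g. \<integral>\<^sup>+g'. \<integral>\<^sup>+x'. ennreal (h g x) * G g' * ennreal (h g' x') * ennreal (s x' g) \<partial>SX \<partial>SY \<partial>SY)"
  unfolding h_lift_def gamma.P_def ydens_def
proof (intro nn_integral_cong)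
  fix g assume g: "g \<in> space SY"
  have "ennreal (h g x) * (\<integral>\<^sup>+g'. G g' * (\<integral>\<^sup>+x'. ennreal (h g' x' * s x' g) \<partial>SX) \<partial>SY)
      = (\<integral>\<^sup>+g'. ennreal (h g x) * G g' * (\<integral>\<^sup>+x'. ennreal (h g' x' * s x' g) \<partial>SX) \<partial>SY)"
    using x g by (subst nn_integral_cmult[symmetric]) (measurable, simp add: mult.assoc)
  also have "\<dots> = (\<integral>\<^sup>+g'. \<integral>\<^sup>+x'. ennreal (h g x) * G g' * ennreal (h g' x') * ennreal (s x' g) \<partial>SX \<partial>SY)"
  proof (intro nn_integral_cong)
    fix g' assume g': "g' \<in> space SY"
    have "ennreal (h g x) * G g' * (\<integral>\<^sup>+x'. ennreal (h g' x' * s x' g) \<partial>SX)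
        = (\<integral>\<^sup>+x'. ennreal (h g x) * G g' * ennreal (h g' x' * s x' g) \<partial>SX)"
      using g g' by (intro nn_integral_cmult[symmetric]) measurable
    also have "\<dots> = (\<integral>\<^sup>+x'. ennreal (h g x) * G g' * ennreal (h g' x') * ennreal (s x' g) \<partial>SX)"
      using g g' s_nonneg h_nonneg by (intro nn_integral_cong) (simp add: ennreal_mult mult.assoc)
    finally show "ennreal (h g x) * G g' * (\<integral>\<^sup>+x'. ennreal (h g' x' * s x' g) \<partial>SX)
        = (\<integral>\<^sup>+x'. ennreal (h g x) * G g' * ennreal (h g' x') * ennreal (s x' g) \<partial>SX)" .
  qed
  finally show "ennreal (h g x) * (\<integral>\<^sup>+g'. G g' * (\<integral>\<^sup>+x'. ennreal (h g' x' * s x' g) \<partial>SX) \<partial>SY)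
      = (\<integral>\<^sup>+g'. \<integral>\<^sup>+x'. ennreal (h g x) * G g' * ennreal (h g' x') * ennreal (s x' g) \<partial>SX \<partial>SY)" .
qed

lemma xdens_h_lift:
  assumes x: "x \<in> space SX" and [measurable]: "G \<in> borel_measurable SY"
  shows "(\<integral>\<^sup>+x'. xdens SY s h x x' * h_lift G x' \<partial>SX) = h_lift (gamma.P G) x"
proof -
  let ?I = "\<lambda>g g' x'. ennreal (h g x) * G g' * ennreal (h g' x') * ennreal (s x' g)"
  have [measurable]: "(\<lambda>w. ?I (fst w) (snd w) x') \<in> borel_measurable (SY \<Otimes>\<^sub>M SY)" if "x' \<in> space SX" for x'
    using x that by measurable
  have "(\<integral>\<^sup>+x'. xdens SY s h x x' * h_lift G x' \<partial>SX) = (\<integral>\<^sup>+x'. \<integral>\<^sup>+g. \<integral>\<^sup>+g'. ?I g g' x' \<partial>SY \<partial>SY \<partial>SX)"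
    using x by (intro nn_integral_cong xdens_h_lift_eq_iterated) auto
  also have "\<dots> = (\<integral>\<^sup>+g. \<integral>\<^sup>+x'. \<integral>\<^sup>+g'. ?I g g' x' \<partial>SY \<partial>SX \<partial>SY)"
    using x by (intro SXSY.Fubini'[symmetric]) measurable
  also have "\<dots> = (\<integral>\<^sup>+g. \<integral>\<^sup>+g'. \<integral>\<^sup>+x'. ?I g g' x' \<partial>SX \<partial>SY \<partial>SY)"
    using x by (intro nn_integral_cong SXSY.Fubini'[symmetric]) measurable
  also have "\<dots> = h_lift (gamma.P G) x"
    using x by (intro h_lift_P_eq_iterated[symmetric]) measurable
  finally show ?thesis .
qed

lemma h_lift_le_1: "x \<in> space SX \<Longrightarrow> (\<And>g. g \<in> space SY \<Longrightarrow> G g \<le> 1) \<Longrightarrow> h_lift G x \<le> 1"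
  unfolding h_lift_def using h_integral nn_integral_mono[of SY "\<lambda>g. ennreal (h g x) * G g" "\<lambda>g. ennreal (h g x)"]
  by (simp add: mult_left_le)

definition s_prob :: "'a set \<Rightarrow> 'b \<Rightarrow> ennreal" where
  "s_prob A g = (\<integral>\<^sup>+x. indicator A x * ennreal (s x g) \<partial>SX)"

lemma s_prob_measurable[measurable]:
  assumes [measurable]: "A \<in> sets SX"
  shows "s_prob A \<in> borel_measurable SY"
  unfolding s_prob_def[abs_def] by measurable

lemma s_prob_le_1: "g \<in> space SY \<Longrightarrow> s_prob A g \<le> 1"
  using s_integral[of g] nn_integral_mono[of SX "\<lambda>x. indicator A x * ennreal (s x g)" "\<lambda>x. ennreal (s x g)"]
  unfolding s_prob_def by (simp add: indicator_def)

lemma emeasure_xkern: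
  assumes x: "x \<in> space SX" and A[measurable]: "A \<in> sets SX"
  shows "emeasure (xkern SX SY s h x) A = h_lift (s_prob A) x"
proof -
  have "emeasure (xkern SX SY s h x) A = (\<integral>\<^sup>+x'. \<integral>\<^sup>+g. ennreal (s x' g * h g x) * indicator A x' \<partial>SY \<partial>SX)"
    unfolding xkern_def xdens_def using x
    by (subst emeasure_density) (measurable, auto intro!: nn_integral_cong nn_integral_multc[symmetric])
  also have "\<dots> = (\<integral>\<^sup>+g. \<integral>\<^sup>+x'. ennreal (s x' g * h g x) * indicator A x' \<partial>SX \<partial>SY)"
    using x by (intro SXSY.Fubini'[symmetric]) measurable
  also have "\<dots> = h_lift (s_prob A) x"
    unfolding h_lift_def s_prob_def
  proof (intro nn_integral_cong)
    fix g assume g: "g \<in> space SY"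
    have "(\<integral>\<^sup>+x'. ennreal (s x' g * h g x) * indicator A x' \<partial>SX)
        = (\<integral>\<^sup>+x'. ennreal (h g x) * (indicator A x' * ennreal (s x' g)) \<partial>SX)"
      using g x s_nonneg h_nonneg by (intro nn_integral_cong) (simp add: ennreal_mult mult_ac)
    also have "\<dots> = ennreal (h g x) * (\<integral>\<^sup>+x'. indicator A x' * ennreal (s x' g) \<partial>SX)"
      using g by (intro nn_integral_cmult) measurable
    finally show "(\<integral>\<^sup>+x'. ennreal (s x' g * h g x) * indicator A x' \<partial>SX)
        = ennreal (h g x) * (\<integral>\<^sup>+x'. indicator A x' * ennreal (s x' g) \<partial>SX)" .
  qed
  finally show ?thesis .
qed

lemma kpow_xkern:
  assumes A[measurable]: "A \<in> sets SX"
  shows "x \<in> space SX \<Longrightarrow> kpow (xkern SX SY s h) (Suc k) x A = enn2real (h_lift ((gamma.P ^^ k) (s_prob A)) x)"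
proof (induction k arbitrary: x)
  case 0
  have "h_lift (s_prob A) x \<le> 1" using s_prob_le_1 by (intro h_lift_le_1[OF 0])
  then have "emeasure (xkern SX SY s h x) A \<noteq> \<top>"
    using emeasure_xkern[OF 0 A] by (auto simp: top_unique)
  then show ?case using emeasure_xkern[OF 0 A] by (simp add: integral_indicator measure_def)
next
  case (Suc k)
  let ?G = "h_lift ((gamma.P ^^ k) (s_prob A))"
  have [measurable]: "?G \<in> borel_measurable (xkern SX SY s h x)" by (simp add: measurable_xkern_iff)
  have G1: "y \<in> space SX \<Longrightarrow> ?G y \<le> 1" for y
    using s_prob_le_1 by (intro h_lift_le_1 gamma.Pk_le_1)
  have "kpow (xkern SX SY s h) (Suc (Suc k)) x A = (\<integral>y. enn2real (?G y) \<partial>xkern SX SY s h x)"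
    unfolding kpow.simps(2)[of _ "Suc k"] by (intro Bochner_Integration.integral_cong refl Suc.IH) simp
  also have "\<dots> = enn2real (\<integral>\<^sup>+y. ennreal (enn2real (?G y)) \<partial>xkern SX SY s h x)"
    by (rule integral_eq_nn_integral) measurable
  also have "(\<integral>\<^sup>+y. ennreal (enn2real (?G y)) \<partial>xkern SX SY s h x) = (\<integral>\<^sup>+y. ?G y \<partial>xkern SX SY s h x)"
  proof (intro nn_integral_cong)
    fix y assume "y \<in> space (xkern SX SY s h x)"
    then have "?G y \<noteq> \<top>" using G1[of y] by (auto simp: top_unique)
    then show "ennreal (enn2real (?G y)) = ?G y" by (simp add: ennreal_enn2real less_top)
  qed
  also have "(\<integral>\<^sup>+y. ?G y \<partial>xkern SX SY s h x) = (\<integral>\<^sup>+y. xdens SY s h x y * ?G y \<partial>SX)"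
    unfolding xkern_def using Suc.prems by (intro nn_integral_density) measurable
  also have "\<dots> = h_lift ((gamma.P ^^ Suc k) (s_prob A)) x"
    using Suc.prems by (simp add: xdens_h_lift)
  finally show ?case .
qed

definition PI_gamma :: "'b \<Rightarrow> ennreal" where
  "PI_gamma g = (\<integral>\<^sup>+x. ennreal (h g x) \<partial>PI)"

lemma PI_gamma_measurable[measurable]: "PI_gamma \<in> borel_measurable SY"
  unfolding PI_gamma_def[abs_def] by measurable

lemma nn_integral_PI_h_lift:
  assumes [measurable]: "G \<in> borel_measurable SY"
  shows "(\<integral>\<^sup>+x. h_lift G x \<partial>PI) = (\<integral>\<^sup>+g. PI_gamma g * G g \<partial>SY)"
proof -
  have [measurable]: "h_lift G \<in> borel_measurable PI" by (simp add: measurable_PI_iff)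
  have "(\<integral>\<^sup>+x. h_lift G x \<partial>PI) = (\<integral>\<^sup>+g. \<integral>\<^sup>+x. ennreal (h g x) * G g \<partial>PI \<partial>SY)"
    unfolding h_lift_def by (rule SYPI.Fubini') measurable
  also have "\<dots> = (\<integral>\<^sup>+g. PI_gamma g * G g \<partial>SY)"
    unfolding PI_gamma_def by (intro nn_integral_cong nn_integral_multc) (simp add: measurable_PI_iff)
  finally show ?thesis .
qed

lemma PI_gamma_integral: "(\<integral>\<^sup>+g. PI_gamma g \<partial>SY) = 1"
proof -
  have "(\<integral>\<^sup>+x. h_lift (\<lambda>_. 1) x \<partial>PI) = (\<integral>\<^sup>+x. 1 \<partial>PI)"
    using space_PI h_integral by (intro nn_integral_cong) (simp add: h_lift_def)
  then show ?thesis using nn_integral_PI_h_lift[of "\<lambda>_. 1"] PI.emeasure_space_1 by simp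
qed

lemma emeasure_PI:
  assumes A[measurable]: "A \<in> sets SX"
  shows "emeasure PI A = (\<integral>\<^sup>+g. PI_gamma g * s_prob A g \<partial>SY)"
proof -
  have "emeasure PI A = (\<integral>\<^sup>+x. emeasure (xkern SX SY s h x) A \<partial>PI)"
    using PI_invariant A unfolding invariant_prob_def by simp
  also have "\<dots> = (\<integral>\<^sup>+x. h_lift (s_prob A) x \<partial>PI)"
    using space_PI by (intro nn_integral_cong) (simp add: emeasure_xkern)
  finally show ?thesis by (simp add: nn_integral_PI_h_lift)
qed

lemma PI_gamma_stationary:
  assumes [measurable]: "F \<in> borel_measurable SY"
  shows "(\<integral>\<^sup>+g. PI_gamma g * gamma.P F g \<partial>SY) = (\<integral>\<^sup>+g. PI_gamma g * F g \<partial>SY)"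
proof -
  have "(\<integral>\<^sup>+g. PI_gamma g * gamma.P F g \<partial>SY) = (\<integral>\<^sup>+x. h_lift (gamma.P F) x \<partial>PI)"
    by (rule nn_integral_PI_h_lift[symmetric]) measurable
  also have "\<dots> = (\<integral>\<^sup>+x. \<integral>\<^sup>+x'. xdens SY s h x x' * h_lift F x' \<partial>SX \<partial>PI)"
    using space_PI by (intro nn_integral_cong xdens_h_lift[symmetric]) auto
  also have "\<dots> = (\<integral>\<^sup>+x. h_lift F x \<partial>PI)"
    by (rule nn_integral_PI_xdens) measurable
  also have "\<dots> = (\<integral>\<^sup>+g. PI_gamma g * F g \<partial>SY)"
    by (rule nn_integral_PI_h_lift) measurable
  finally show ?thesis .
qed

theorem kpow_tv_dist_le:
  assumes "drift_minorization SY (ydens SX s h) V lam L \<epsilon> d Q"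
    and x: "x \<in> space SX" and r: "0 < r" "r < 1"
  shows "ennreal (tv_dist SX (kpow (xkern SX SY s h) (Suc k) x) (measure PI))
    \<le> ennreal (coupling_rate lam L \<epsilon> d r ^ k)
      * (ennreal (2 + L / (1 - lam)) + (\<integral>\<^sup>+g. ennreal (V g) * ennreal (h g x) \<partial>SY))"
proof (rule tv_dist_le)
  interpret stationary_coupling SY "ydens SX s h" V lam L \<epsilon> d Q "\<lambda>g. ennreal (h g x)" PI_gamma
    using assms(1) x h_integral PI_gamma_integral PI_gamma_stationary
    by (intro stationary_coupling.intro stationary_coupling_axioms.intro) auto
  fix A assume A[measurable]: "A \<in> sets SX"
  have "kpow (xkern SX SY s h) (Suc k) x A = enn2real (\<integral>\<^sup>+g. ennreal (h g x) * (gamma.P ^^ k) (s_prob A) g \<partial>SY)"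
    using kpow_xkern[OF A x] by (simp add: h_lift_def)
  moreover have "measure PI A = enn2real (\<integral>\<^sup>+g. PI_gamma g * s_prob A g \<partial>SY)"
    using emeasure_PI[OF A] by (simp add: measure_def)
  ultimately show "ennreal \<bar>kpow (xkern SX SY s h) (Suc k) x A - measure PI A\<bar>
    \<le> ennreal (coupling_rate lam L \<epsilon> d r ^ k)
      * (ennreal (2 + L / (1 - lam)) + (\<integral>\<^sup>+g. ennreal (V g) * ennreal (h g x) \<partial>SY))"
    using s_prob_le_1 r by (simp add: initial_Pk_stationary_diff_le)
qed

end

theorem corollary1:
  fixes X :: "'a::euclidean_space set" and Y :: "'b::euclidean_space set"
    and s :: "'a \<Rightarrow> 'b \<Rightarrow> real" and h :: "'b \<Rightarrow> 'a \<Rightarrow> real"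
    and V :: "'b \<Rightarrow> real" and lam L \<epsilon> d r :: real
    and Q :: "'b measure" and PI :: "'a measure"
  defines "SX \<equiv> restrict_space lborel X" and "SY \<equiv> restrict_space lborel Y"
  assumes X: "X \<in> sets lborel" and Y: "Y \<in> sets lborel"
    and s_meas: "(\<lambda>(x, g). s x g) \<in> borel_measurable (SX \<Otimes>\<^sub>M SY)"
    and s_nonneg: "\<forall>x\<in>X. \<forall>g\<in>Y. s x g \<ge> 0"
    and s_pdf: "\<forall>g\<in>Y. (\<integral>\<^sup>+x. ennreal (s x g) \<partial>SX) = 1"
    and h_meas: "(\<lambda>(g, x). h g x) \<in> borel_measurable (SY \<Otimes>\<^sub>M SX)"
    and h_nonneg: "\<forall>g\<in>Y. \<forall>x\<in>X. h g x \<ge> 0"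
    and h_pdf: "\<forall>x\<in>X. (\<integral>\<^sup>+g. ennreal (h g x) \<partial>SY) = 1"
    and harrisX: "harris_ergodic SX (xkern SX SY s h)"
    and harrisY: "harris_ergodic SY (ykern SX SY s h)"
    and Pi_inv: "invariant_prob SX (xkern SX SY s h) PI"
    and V_meas: "V \<in> borel_measurable SY"
    and V_nonneg: "\<forall>g\<in>Y. V g \<ge> 0"
    and lam: "0 \<le> lam" "lam < 1"
    and L: "0 \<le> L"
    and drift: "\<forall>g\<in>Y. (\<integral>\<^sup>+g'. ennreal (V g') * ydens SX s h g g' \<partial>SY) \<le> ennreal (lam * V g + L)"
    and eps: "\<epsilon> > 0"
    and Q: "prob_space Q" "sets Q = sets SY"
    and minor: "\<forall>g\<in>Y. V g < d \<longrightarrow>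
                  (\<forall>A\<in>sets SY. ennreal \<epsilon> * emeasure Q A \<le> emeasure (ykern SX SY s h g) A)"
    and d: "d > 2 * L / (1 - lam)"
    and r: "0 < r" "r < 1"
  shows "\<forall>x\<in>X. \<forall>m::nat. m \<ge> 1 \<longrightarrow>
           ennreal (tv_dist SX (kpow (xkern SX SY s h) m x) (measure PI))
             \<le> (ennreal (2 + L / (1 - lam)) + (\<integral>\<^sup>+g. ennreal (V g * h g x) \<partial>SY))
               * ennreal ((max ((1 - \<epsilon>) powr r)
                   (((1 + 2 * L + lam * d) / (1 + d)) powr (1 - r) * (1 + 2 * (lam * d + L)) powr r))
                  ^ (m - 1))"
proof -
  have spaces: "space SX = X" "space SY = Y"
    unfolding SX_def SY_def by (simp_all add: space_restrict_space)
  interpret data_augmentation SX SY s h PI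
    unfolding data_augmentation_def data_augmentation_axioms_def
    using X Y s_meas s_nonneg s_pdf h_meas h_nonneg h_pdf harrisX Pi_inv
    by (simp add: SX_def SY_def spaces sigma_finite_measure_restrict_space sigma_finite_lborel
        harris_ergodic_def)
  have "drift_minorization SY (ydens SX s h) V lam L \<epsilon> d Q"
    using V_meas V_nonneg lam L drift eps Q minor d
    by (intro drift_minorization.intro gamma.density_kernel_axioms drift_minorization_axioms.intro)
      (auto simp: spaces ykern_def)
  note tv_le = kpow_tv_dist_le[OF this _ r]
  have "(\<integral>\<^sup>+g. ennreal (V g * h g x) \<partial>SY) = (\<integral>\<^sup>+g. ennreal (V g) * ennreal (h g x) \<partial>SY)" if "x \<in> X" for x
    using that V_nonneg h_nonneg by (intro nn_integral_cong) (simp add: spaces ennreal_mult)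
  then show ?thesis
    using tv_le spaces unfolding coupling_rate_def
    by (auto simp: mult.commute dest!: Suc_le_D)
qed

end
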